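(* Let $k$ be a field and $Q,q\in k^\times$ with $f_d(Q,q)=\prod_{i=1-d}^{d-1}(Q^{-2}+q^{2i})\neq0$. Then the functors $\otimes^d_+$ and $\otimes^d_-$ are direct summands of $\otimes^d$; i.e. for each $n$, $\otimes^d_\pm(V_n)$ is a direct summand of $V_n^{\otimes d}$, compatibly with all morphisms $\mathrm{Hom}_{\mathcal H^B_{Q,q}(d)}(V_n^{\otimes d},V_m^{\otimes d})$.
   Context: $\mathcal H^B_{Q,q}(d)$ is generated by $T_0,\dots,T_{d-1}$ with relations $(T_0+Q)(T_0-Q^{-1})=0$; $(T_i+q)(T_i-q^{-1})=0$ ($i>0$); $T_iT_{i+1}T_i=T_{i+1}T_iT_{i+1}$ ($i>0$); $T_0T_1T_0T_1=T_1T_0T_1T_0$; $T_iT_j=T_jT_i$ ($|i-j|>1$); $K_i=T_{i-1}\cdots T_1T_0T_1\cdots T_{i-1}$ ($1\le i\le d$), which pairwise commute. $V_n$ has basis $v_i$, $i\in\mathbb I_n$ ($\mathbb I_{2s}=\{-\tfrac{2s-1}{2},\dots,\tfrac{2s-1}{2}\}$ half-integers, $\mathbb I_{2s+1}=\{-s,\dots,s\}$); $\mathcal H^B_{Q,q}(d)$ acts on $V_n^{\otimes d}$ from the right with $T_i$ ($i>0$) acting on factors $i,i+1$ by $R_q$: $v_i\otimes v_j\mapsto q^{-1}v_i\otimes v_j$ ($i=j$), $v_j\otimes v_i$ ($i<j$), $v_j\otimes v_i+(q^{-1}-q)v_i\otimes v_j$ ($i>j$), and $T_0$ acting on the first factor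 by $K_Q$: $v_i\mapsto Q^{-1}v_i$ ($i=0$), $v_{-i}$ ($i>0$), $v_{-i}+(Q^{-1}-Q)v_i$ ($i<0$). Every eigenvalue of $K_i$ on $V_n^{\otimes d}$ has the form $Q^{-1}q^{2j}$ or $-Qq^{2j}$ with $|j|<i$, and under $f_d(Q,q)\ne0$ these two sets of values are disjoint. $\otimes^d$ is the polynomial functor $V_n\mapsto V_n^{\otimes d}$ (a functor on the category with objects $V_n$ and morphisms $\mathrm{Hom}_{\mathcal H^B_{Q,q}(d)}(V_n^{\otimes d},V_m^{\otimes d})$). $\otimes^d_+$ is the largest quotient of $\otimes^d$ on which each $K_i$ has only eigenvalues of the form $Q^{-1}q^{2j}$; $\otimes^d_-$ is the largest subfunctor of $\otimes^d$ on which each $K_i$ has only eigenvalues of the form $-Qq^{2j}$. *)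

theory Defs
  imports Main
begin

(* Index set I_n, doubled: a in I_n  <-> 2a in Jn n.  This is order preserving,
   sends 0 to 0 and commutes with negation. *)
definition Jn :: "nat \<Rightarrow> int set" where
  "Jn n = {a. \<bar>a\<bar> \<le> int n - 1 \<and> even (a + int n - 1)}"

(* basis words of V_n^{\<otimes> d}: v_{w!0} \<otimes> ... \<otimes> v_{w!(d-1)} *)
definition W :: "nat \<Rightarrow> nat \<Rightarrow> int list set" where
  "W n d = {w. length w = d \<and> set w \<subseteq> Jn n}"

(* V_n^{\<otimes> d} as coefficient functions supported on basis words *)
definition Tens :: "nat \<Rightarrow> nat \<Rightarrow> (int list \<Rightarrow> 'k::field) set" where
  "Tens n d = {f. \<forall>w. w \<notin> W n d \<longrightarrow> f w = 0}"

(* coefficient of basis vector u in (basis vector w) \<cdot> T_i *)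
definition coef :: "'k::field \<Rightarrow> 'k \<Rightarrow> nat \<Rightarrow> int list \<Rightarrow> int list \<Rightarrow> 'k" where
  "coef Q q i w u =
    (if i = 0 then
       (let a = w ! 0; s = w[0 := - a] in
        if a = 0 then (if u = w then inverse Q else 0)
        else if a > 0 then (if u = s then 1 else 0)
        else (if u = s then 1 else 0) + (if u = w then inverse Q - Q else 0))
     else
       (let a = w ! (i - 1); b = w ! i; s = w[i - 1 := b, i := a] in
        if a = b then (if u = w then inverse q else 0)
        else if a < b then (if u = s then 1 else 0)
        else (if u = s then 1 else 0) + (if u = w then inverse q - q else 0)))"

(* right action f \<mapsto> f \<cdot> T_i on V_n^{\<otimes> d} *)
definition act :: "'k::field \<Rightarrow> 'k \<Rightarrow> nat \<Rightarrow> nat \<Rightarrow> nat \<Rightarrow> (int list \<Rightarrow> 'k) \<Rightarrow> (int list \<Rightarrow> 'k)" where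
  "act Q q n d i f = (\<lambda>u. \<Sum>w\<in>W n d. f w * coef Q q i w u)"

(* K_i = T_{i-1} ... T_1 T_0 T_1 ... T_{i-1}, acting from the right *)
definition Kact :: "'k::field \<Rightarrow> 'k \<Rightarrow> nat \<Rightarrow> nat \<Rightarrow> nat \<Rightarrow> (int list \<Rightarrow> 'k) \<Rightarrow> (int list \<Rightarrow> 'k)" where
  "Kact Q q n d i f = fold (\<lambda>j g. act Q q n d j g) (rev [1..<i] @ 0 # [1..<i]) f"

definition HomH :: "'k::field \<Rightarrow> 'k \<Rightarrow> nat \<Rightarrow> nat \<Rightarrow> nat
    \<Rightarrow> ((int list \<Rightarrow> 'k) \<Rightarrow> (int list \<Rightarrow> 'k)) set" where
  "HomH Q q d n m = {\<phi>.
     (\<forall>f\<in>Tens n d. \<phi> f \<in> Tens m d) \<and>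
     (\<forall>f\<in>Tens n d. \<forall>g\<in>Tens n d. \<phi> (\<lambda>w. f w + g w) = (\<lambda>w. \<phi> f w + \<phi> g w)) \<and>
     (\<forall>c. \<forall>f\<in>Tens n d. \<phi> (\<lambda>w. c * f w) = (\<lambda>w. c * \<phi> f w)) \<and>
     (\<forall>j<d. \<forall>f\<in>Tens n d. \<phi> (act Q q n d j f) = act Q q m d j (\<phi> f))}"

definition submodule :: "'k::field \<Rightarrow> 'k \<Rightarrow> nat \<Rightarrow> nat \<Rightarrow> (int list \<Rightarrow> 'k) set \<Rightarrow> bool" where
  "submodule Q q d n S \<longleftrightarrow>
     S \<subseteq> Tens n d \<and> (\<lambda>w. 0) \<in> S \<and>
     (\<forall>f\<in>S. \<forall>g\<in>S. (\<lambda>w. f w + g w) \<in> S) \<and>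
     (\<forall>c. \<forall>f\<in>S. (\<lambda>w. c * f w) \<in> S) \<and>
     (\<forall>j<d. \<forall>f\<in>S. act Q q n d j f \<in> S)"

definition subfunctor :: "'k::field \<Rightarrow> 'k \<Rightarrow> nat \<Rightarrow> (nat \<Rightarrow> (int list \<Rightarrow> 'k) set) \<Rightarrow> bool" where
  "subfunctor Q q d S \<longleftrightarrow>
     (\<forall>n. submodule Q q d n (S n)) \<and>
     (\<forall>n m. \<forall>\<phi>\<in>HomH Q q d n m. \<phi> ` S n \<subseteq> S m)"

definition plus_eig :: "'k::field \<Rightarrow> 'k \<Rightarrow> nat \<Rightarrow> 'k set" where
  "plus_eig Q q i = {inverse Q * q powi (2 * j) | j::int. \<bar>j\<bar> < int i}"

definition minus_eig :: "'k::field \<Rightarrow> 'k \<Rightarrow> nat \<Rightarrow> 'k set" where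
  "minus_eig Q q i = {- Q * q powi (2 * j) | j::int. \<bar>j\<bar> < int i}"

definition sub_eigs_in :: "'k::field \<Rightarrow> 'k \<Rightarrow> nat \<Rightarrow> nat \<Rightarrow> (int list \<Rightarrow> 'k) set \<Rightarrow> nat \<Rightarrow> 'k set \<Rightarrow> bool" where
  "sub_eigs_in Q q d n S i A \<longleftrightarrow>
     (\<forall>f\<in>S. \<forall>e. f \<noteq> (\<lambda>w. 0) \<and> Kact Q q n d i f = (\<lambda>w. e * f w) \<longrightarrow> e \<in> A)"

(* every eigenvalue of K_i on the quotient V_n^{\<otimes> d} / U lies in A *)
definition quot_eigs_in :: "'k::field \<Rightarrow> 'k \<Rightarrow> nat \<Rightarrow> nat \<Rightarrow> (int list \<Rightarrow> 'k) set \<Rightarrow> nat \<Rightarrow> 'k set \<Rightarrow> bool" where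
  "quot_eigs_in Q q d n U i A \<longleftrightarrow>
     (\<forall>f\<in>Tens n d. \<forall>e. f \<notin> U \<and> (\<lambda>w. Kact Q q n d i f w - e * f w) \<in> U \<longrightarrow> e \<in> A)"

(* S = \<otimes>^d_- : the largest subfunctor on which every K_i has only eigenvalues -Q q^{2j} *)
definition minus_prop :: "'k::field \<Rightarrow> 'k \<Rightarrow> nat \<Rightarrow> (nat \<Rightarrow> (int list \<Rightarrow> 'k) set) \<Rightarrow> bool" where
  "minus_prop Q q d S \<longleftrightarrow> subfunctor Q q d S \<and>
     (\<forall>n. \<forall>i\<in>{1..d}. sub_eigs_in Q q d n (S n) i (minus_eig Q q i))"

definition is_tensor_minus :: "'k::field \<Rightarrow> 'k \<Rightarrow> nat \<Rightarrow> (nat \<Rightarrow> (int list \<Rightarrow> 'k) set) \<Rightarrow> bool" where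
  "is_tensor_minus Q q d S \<longleftrightarrow> minus_prop Q q d S \<and>
     (\<forall>S'. minus_prop Q q d S' \<longrightarrow> (\<forall>n. S' n \<subseteq> S n))"

(* \<otimes>^d_+ = \<otimes>^d / U where U is the smallest subfunctor such that every K_i has
   only eigenvalues Q^{-1} q^{2j} on the quotient (i.e. the largest such quotient) *)
definition plus_prop :: "'k::field \<Rightarrow> 'k \<Rightarrow> nat \<Rightarrow> (nat \<Rightarrow> (int list \<Rightarrow> 'k) set) \<Rightarrow> bool" where
  "plus_prop Q q d U \<longleftrightarrow> subfunctor Q q d U \<and>
     (\<forall>n. \<forall>i\<in>{1..d}. quot_eigs_in Q q d n (U n) i (plus_eig Q q i))"

definition is_tensor_plus_kernel :: "'k::field \<Rightarrow> 'k \<Rightarrow> nat \<Rightarrow> (nat \<Rightarrow> (int list \<Rightarrow> 'k) set) \<Rightarrow> bool" where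
  "is_tensor_plus_kernel Q q d U \<longleftrightarrow> plus_prop Q q d U \<and>
     (\<forall>U'. plus_prop Q q d U' \<longrightarrow> (\<forall>n. U n \<subseteq> U' n))"

definition natural_idempotent :: "'k::field \<Rightarrow> 'k \<Rightarrow> nat
    \<Rightarrow> (nat \<Rightarrow> (int list \<Rightarrow> 'k) \<Rightarrow> (int list \<Rightarrow> 'k)) \<Rightarrow> bool" where
  "natural_idempotent Q q d p \<longleftrightarrow>
     (\<forall>n. p n \<in> HomH Q q d n n \<and> (\<forall>f\<in>Tens n d. p n (p n f) = p n f)) \<and>
     (\<forall>n m. \<forall>\<phi>\<in>HomH Q q d n m. \<forall>f\<in>Tens n d. \<phi> (p n f) = p m (\<phi> f))"

definition summand_sub :: "'k::field \<Rightarrow> 'k \<Rightarrow> nat \<Rightarrow> (nat \<Rightarrow> (int list \<Rightarrow> 'k) set) \<Rightarrow> bool" where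
  "summand_sub Q q d S \<longleftrightarrow>
     (\<exists>p. natural_idempotent Q q d p \<and> (\<forall>n. p n ` Tens n d = S n))"

(* quotient functor \<otimes>^d / U is a direct summand of \<otimes>^d (the quotient map splits naturally) *)
definition summand_quot :: "'k::field \<Rightarrow> 'k \<Rightarrow> nat \<Rightarrow> (nat \<Rightarrow> (int list \<Rightarrow> 'k) set) \<Rightarrow> bool" where
  "summand_quot Q q d U \<longleftrightarrow>
     (\<exists>p. natural_idempotent Q q d p \<and> (\<forall>n. {f\<in>Tens n d. p n f = (\<lambda>w. 0)} = U n))"

definition f_d :: "nat \<Rightarrow> 'k::field \<Rightarrow> 'k \<Rightarrow> 'k" where
  "f_d d Q q = (\<Prod>i\<in>{1 - int d..int d - 1}. Q powi (-2) + q powi (2 * i))"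

end

(*
  The intertwiner T_i (K_i - K_(i+1)) + (q^-1 - q) K_(i+1) shows, by induction on i starting from
  the quadratic relation (T_0 - Q^-1)(T_0 + Q) = 0, that on every H-subquotient of V_n^(x)d the
  element K_i is killed by a polynomial with roots among Q^-1 q^2j and -Q q^2j, |j| < i.  As
  f_d(Q, q) <> 0 keeps these two families apart, a Bezout identity turns one such polynomial into
  idempotents proj_i, polynomials in K_i, onto the generalised eigenspaces for either family.
  Their product P commutes with each T_j, since T_j commutes with K_i for i not in {j, j+1} and with
  the symmetric function proj_j proj_(j+1) of K_j and K_(j+1); so P is an idempotent
  H-endomorphism, natural in n because H-homomorphisms commute with polynomials in the T_j.
  Running the induction on a subfunctor with eigenvalues -Q q^2j shows that P fixes it, so the
  image of P is (x)^d_-; dually the kernel of P is the smallest subfunctor with quotient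
  eigenvalues Q^-1 q^2j, so (x)^d_+ = (x)^d / ker P is a direct summand as well.
*)

theory Submission
  imports Defs "HOL-Computational_Algebra.Polynomial"
begin

section \<open>Linear operators on coefficient functions\<close>

definition is_linop :: "((int list \<Rightarrow> 'k::field) \<Rightarrow> (int list \<Rightarrow> 'k)) \<Rightarrow> bool" where
  "is_linop A \<longleftrightarrow> (\<forall>f g. A (\<lambda>w. f w + g w) = (\<lambda>w. A f w + A g w)) \<and>
                   (\<forall>c f. A (\<lambda>w. c * f w) = (\<lambda>w. c * A f w))"

typedef (overloaded) ('k::field) linop = "{A :: (int list \<Rightarrow> 'k) \<Rightarrow> (int list \<Rightarrow> 'k). is_linop A}"
  morphisms app Abs_linop
  by (rule exI[of _ "\<lambda>f. f"]) (simp add: is_linop_def)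

setup_lifting type_definition_linop

text \<open>Operators act on the right, as \<open>\<H>\<^sup>B\<^sub>Q\<^sub>,\<^sub>q(d)\<close> does: \<open>A * B\<close> applies \<open>A\<close> first.\<close>

instantiation linop :: (field) ring_1
begin
lift_definition zero_linop :: "'a linop" is "\<lambda>f w. 0" by (simp add: is_linop_def)
lift_definition one_linop :: "'a linop" is "\<lambda>f. f" by (simp add: is_linop_def)
lift_definition plus_linop :: "'a linop \<Rightarrow> 'a linop \<Rightarrow> 'a linop" is "\<lambda>A B f w. A f w + B f w"
  by (simp add: is_linop_def algebra_simps)
lift_definition uminus_linop :: "'a linop \<Rightarrow> 'a linop" is "\<lambda>A f w. - A f w"
  by (simp add: is_linop_def algebra_simps)
lift_definition minus_linop :: "'a linop \<Rightarrow> 'a linop \<Rightarrow> 'a linop" is "\<lambda>A B f w. A f w - B f w"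
  by (simp add: is_linop_def algebra_simps)
lift_definition times_linop :: "'a linop \<Rightarrow> 'a linop \<Rightarrow> 'a linop" is "\<lambda>A B f. B (A f)"
  by (simp add: is_linop_def)
instance
proof
  fix a b c :: "'a linop"
  show "a * b * c = a * (b * c)" by transfer simp
  show "a + b + c = a + (b + c)" by transfer (simp add: algebra_simps)
  show "a + b = b + a" by transfer (simp add: algebra_simps)
  show "0 + a = a" by transfer simp
  show "- a + a = 0" by transfer simp
  show "a - b = a + - b" by transfer simp
  show "(a + b) * c = a * c + b * c" by transfer (simp add: is_linop_def)
  show "a * (b + c) = a * b + a * c" by transfer simp
  show "1 * a = a" by transfer simp
  show "a * 1 = a" by transfer simp
  show "(0::'a linop) \<noteq> 1" by transfer (metis one_neq_zero)
qed
end

lift_definition scalar :: "'k::field \<Rightarrow> 'k linop" is "\<lambda>c f w. c * f w"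
  by (simp add: is_linop_def algebra_simps)

lemma linop_eqI: "(\<And>f u. app A f u = app B f u) \<Longrightarrow> A = B"
  by (metis app_inject ext)

lemma app_plus: "app (A + B) f = (\<lambda>w. app A f w + app B f w)" by transfer simp
lemma app_minus: "app (A - B) f = (\<lambda>w. app A f w - app B f w)" by transfer simp
lemma app_uminus: "app (- A) f = (\<lambda>w. - app A f w)" by transfer simp
lemma app_times: "app (A * B) f = app B (app A f)" by transfer simp
lemma app_one: "app 1 f = f" by transfer simp
lemma app_zero: "app 0 f = (\<lambda>w. 0)" by transfer simp
lemma app_scalar: "app (scalar c) f = (\<lambda>w. c * f w)" by transfer simp

lemma app_add: "app A (\<lambda>w. f w + g w) = (\<lambda>w. app A f w + app A g w)"
  using app[of A] by (simp add: is_linop_def)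

lemma app_smult: "app A (\<lambda>w. c * f w) = (\<lambda>w. c * app A f w)"
  using app[of A] by (simp add: is_linop_def)

lemma app_zero_fun: "app A (\<lambda>w. 0) = (\<lambda>w. 0)"
  using app_smult[of A 0 "\<lambda>w. 0"] by simp

lemma app_diff: "app A (\<lambda>w. f w - g w) = (\<lambda>w. app A f w - app A g w)"
  using app_add[of A f "\<lambda>w. (-1) * g w"] app_smult[of A "-1" g] by simp

lemma linop_eq_0I:
  assumes "app A ` UNIV \<subseteq> {\<lambda>w. 0}"
  shows "A = 0"
proof (rule linop_eqI)
  fix f u
  have "app A f = (\<lambda>w. 0)" using assms by blast
  then show "app A f u = app 0 f u" by (simp add: app_zero)
qed

lemma scalar_add: "scalar (a + b) = scalar a + scalar b" by transfer (simp add: algebra_simps)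
lemma scalar_mult: "scalar (a * b) = scalar a * scalar b" by transfer (simp add: algebra_simps)
lemma scalar_one: "scalar 1 = 1" by transfer simp
lemma scalar_zero: "scalar 0 = 0" by transfer simp
lemma scalar_minus: "scalar (- a) = - scalar a" by transfer simp
lemma scalar_diff: "scalar (a - b) = scalar a - scalar b" by transfer (simp add: algebra_simps)
lemma scalar_commute: "scalar c * A = A * scalar c" by transfer (simp add: is_linop_def)

lemma scalar_commute_left: "scalar c * (A * B) = A * (scalar c * B)"
  by (metis mult.assoc scalar_commute)

lemma scalar_two: "scalar 2 = 2"
  by (metis one_add_one scalar_add scalar_one)

section \<open>Polynomials in an operator\<close>

definition poly_op :: "'k::field poly \<Rightarrow> 'k linop \<Rightarrow> 'k linop" where
  "poly_op p A = fold_coeffs (\<lambda>a B. scalar a + A * B) p 0"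

lemma poly_op_0 [simp]: "poly_op 0 A = 0"
  by (simp add: poly_op_def)

lemma poly_op_pCons [simp]: "poly_op (pCons a p) A = scalar a + A * poly_op p A"
  by (cases "p = 0 \<and> a = 0") (auto simp: poly_op_def scalar_zero)

lemma poly_op_add: "poly_op (p + r) A = poly_op p A + poly_op r A"
proof (induction p arbitrary: r rule: pCons_induct)
  case (pCons a p)
  then show ?case
    by (cases r rule: pCons_cases) (simp add: scalar_add distrib_left add_ac)
qed simp

lemma poly_op_smult: "poly_op (smult c p) A = scalar c * poly_op p A"
  by (induction p) (simp_all add: scalar_mult distrib_left scalar_commute_left)

lemma poly_op_mult: "poly_op (p * r) A = poly_op p A * poly_op r A"
  by (induction p) (simp_all add: poly_op_add poly_op_smult scalar_zero algebra_simps)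

lemma poly_op_1: "poly_op 1 A = 1"
  by (simp add: one_pCons scalar_one)

lemma poly_op_linear: "poly_op [:- r, 1:] A = A - scalar r"
  by (simp add: scalar_one scalar_minus)

lemma poly_op_quadratic: "poly_op [:a, b, 1:] A = scalar a + scalar b * A + A * A"
  by (simp add: scalar_one scalar_zero scalar_commute distrib_left)

lemma poly_op_commute:
  assumes "B * A = A * B"
  shows "B * poly_op p A = poly_op p A * B"
proof (induction p)
  case (pCons a p)
  then have "B * (A * poly_op p A) = A * poly_op p A * B"
    by (metis assms mult.assoc)
  then show ?case by (simp add: distrib_left distrib_right scalar_commute)
qed simp

lemma poly_op_mult_commute: "poly_op p A * poly_op r A = poly_op r A * poly_op p A"
  by (simp flip: poly_op_mult add: mult.commute)

lemma linear_factors_commute: "(A - scalar a) * (A - scalar b) = (A - scalar b) * (A - scalar a)"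
  using poly_op_mult_commute[of "[:- a, 1:]" A "[:- b, 1:]"] by (simp only: poly_op_linear)

lemma poly_op_intertwine:
  assumes "P * Y = X * P"
  shows "P * poly_op p Y = poly_op p X * P"
proof (induction p)
  case (pCons a p)
  then have "P * (Y * poly_op p Y) = X * poly_op p X * P"
    by (metis assms mult.assoc)
  then show ?case by (simp add: distrib_left distrib_right scalar_commute)
qed simp

lemma poly_op_prod_list: "poly_op (prod_list ps) A = prod_list (map (\<lambda>p. poly_op p A) ps)"
  by (induction ps) (simp_all add: poly_op_1 poly_op_mult)

lemma poly_op_altdef: "poly_op p A = (\<Sum>k\<le>degree p. scalar (coeff p k) * A ^ k)"
proof (induction p)
  case (pCons a p)
  show ?case
  proof (cases "p = 0")
    case False
    have "poly_op (pCons a p) A = scalar a + (\<Sum>k\<le>degree p. scalar (coeff p k) * A ^ Suc k)"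
      using pCons.IH by (simp add: sum_distrib_left scalar_commute_left)
    also have "\<dots> = (\<Sum>k\<le>degree (pCons a p). scalar (coeff (pCons a p) k) * A ^ k)"
      using False by (simp add: degree_pCons_eq sum.atMost_Suc_shift del: sum.atMost_Suc)
    finally show ?thesis .
  qed (simp add: scalar_zero)
qed (simp add: scalar_zero)

lemma app_poly_op_eigenvector:
  assumes "app A v = (\<lambda>w. e * v w)"
  shows "app (poly_op p A) v = (\<lambda>w. poly p e * v w)"
  by (induction p) (simp_all add: assms app_plus app_times app_scalar app_smult app_zero algebra_simps)

definition poly_of_roots :: "'k::field list \<Rightarrow> 'k poly" where
  "poly_of_roots rs = prod_list (map (\<lambda>r. [:- r, 1:]) rs)"

lemma poly_of_roots_Nil [simp]: "poly_of_roots [] = 1"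
  by (simp add: poly_of_roots_def)

lemma poly_of_roots_Cons: "poly_of_roots (r # rs) = [:- r, 1:] * poly_of_roots rs"
  by (simp add: poly_of_roots_def)

lemma poly_of_roots_append: "poly_of_roots (xs @ ys) = poly_of_roots xs * poly_of_roots ys"
  by (simp add: poly_of_roots_def)

lemma poly_of_roots_concat:
  "prod_list (map (\<lambda>x. poly_of_roots (f x)) xs) = poly_of_roots (concat (map f xs))"
  by (induction xs) (simp_all add: poly_of_roots_append)

lemma poly_of_roots_partition:
  "poly_of_roots rs = poly_of_roots (filter P rs) * poly_of_roots (filter (\<lambda>x. \<not> P x) rs)"
  by (induction rs) (simp_all add: poly_of_roots_Cons mult_ac del: mult_pCons_left)

lemma poly_of_roots_eq_0_iff: "poly (poly_of_roots rs) e = 0 \<longleftrightarrow> e \<in> set rs"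
  by (induction rs) (auto simp: poly_of_roots_Cons)

lemma poly_op_poly_of_roots: "poly_op (poly_of_roots rs) A = prod_list (map (\<lambda>r. A - scalar r) rs)"
  by (induction rs) (simp_all add: poly_of_roots_Cons poly_op_1 poly_op_mult poly_op_linear del: mult_pCons_left poly_op_pCons)

lemma app_poly_of_roots_eigenvector:
  assumes "app A v = (\<lambda>w. e * v w)" "app (poly_op (poly_of_roots rs) A) v = (\<lambda>w. 0)" "v \<noteq> (\<lambda>w. 0)"
  shows "e \<in> set rs"
proof -
  have "(\<lambda>w. poly (poly_of_roots rs) e * v w) = (\<lambda>w. 0)"
    using app_poly_op_eigenvector[OF assms(1)] assms(2) by simp
  with assms(3) have "poly (poly_of_roots rs) e = 0" by (metis mult_eq_0_iff)
  then show ?thesis by (simp add: poly_of_roots_eq_0_iff)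
qed

text \<open>Bezout identities are built by hand: the library's \<open>gcd\<close> on polynomials needs a factorial
  coefficient ring, not just a field.\<close>

definition comaximal :: "'k::field poly \<Rightarrow> 'k poly \<Rightarrow> bool" where
  "comaximal P R \<longleftrightarrow> (\<exists>a b. a * P + b * R = 1)"

lemma comaximal_commute: "comaximal P R \<longleftrightarrow> comaximal R P"
  unfolding comaximal_def by (metis add.commute)

lemma comaximal_1: "comaximal P 1"
  unfolding comaximal_def by (rule exI[of _ 0], rule exI[of _ 1]) simp

lemma comaximal_mult:
  assumes "comaximal P R1" "comaximal P R2"
  shows "comaximal P (R1 * R2)"
proof -
  obtain a b c e where 1: "a * P + b * R1 = 1" and 2: "c * P + e * R2 = 1"
    using assms by (auto simp: comaximal_def)
  have "(a * P + b * R1) * (c * P + e * R2) = 1" using 1 2 by simp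
  then have "(a * c * P + a * e * R2 + b * R1 * c) * P + (b * e) * (R1 * R2) = 1"
    by (simp add: algebra_simps)
  then show ?thesis unfolding comaximal_def by blast
qed

lemma comaximal_linear:
  assumes "x \<noteq> y"
  shows "comaximal [:- x, 1:] [:- y, 1:]"
proof -
  have "[:inverse (y - x):] * [:- x, 1:] + [:- inverse (y - x):] * [:- y, 1:] = [:inverse (y - x) * (y - x):]"
    by (simp add: algebra_simps)
  also have "\<dots> = 1" using assms by (simp add: one_pCons)
  finally show ?thesis unfolding comaximal_def by blast
qed

lemma comaximal_poly_of_roots:
  assumes "set xs \<inter> set ys = {}"
  shows "comaximal (poly_of_roots xs) (poly_of_roots ys)"
  using assms
proof (induction xs)
  case (Cons x xs)
  have "comaximal [:- x, 1:] (poly_of_roots ys)" if "x \<notin> set ys" for ys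
    using that
  proof (induction ys)
    case (Cons y ys)
    then show ?case
      unfolding poly_of_roots_Cons by (intro comaximal_mult comaximal_linear) auto
  qed (simp add: comaximal_1)
  then have "comaximal [:- x, 1:] (poly_of_roots ys)"
    using Cons.prems by simp
  moreover have "comaximal (poly_of_roots xs) (poly_of_roots ys)"
    using Cons by simp
  ultimately show ?case
    unfolding poly_of_roots_Cons by (metis comaximal_commute comaximal_mult)
qed (metis comaximal_commute comaximal_1 poly_of_roots_Nil)

section \<open>An element conjugated by a quadratic generator\<close>

lemma commute_mult:
  fixes A B C :: "'a::semigroup_mult"
  assumes "A * B = B * A" "A * C = C * A"
  shows "A * (B * C) = (B * C) * A"
proof -
  have "A * (B * C) = B * (A * C)" using assms(1) by (simp flip: mult.assoc)
  also have "\<dots> = (B * C) * A" using assms(2) by (simp add: mult.assoc)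
  finally show ?thesis .
qed

text \<open>The abstract situation of \<open>X = K\<^sub>i\<close>, \<open>T = T\<^sub>i\<close>, \<open>Y = K\<^sub>i\<^sub>+\<^sub>1\<close> inside the Hecke algebra.\<close>

locale quadratic_conjugate =
  fixes T X Y c :: "'a::ring_1"
  assumes quadratic: "T * T = c * T + 1"
    and Y_conj: "Y = T * X * T"
    and X_Y: "X * Y = Y * X"
    and c_central: "\<And>Z. Z * c = c * Z"
begin

lemma c_left_commute: "A * (c * B) = c * (A * B)"
  by (metis c_central mult.assoc)

lemma T_X: "T * X = Y * T - c * Y"
proof -
  have "Y * T = T * X * (T * T)" unfolding Y_conj by (simp only: mult.assoc)
  also have "\<dots> = c * Y + T * X"
    unfolding Y_conj quadratic by (simp add: distrib_left c_left_commute mult.assoc)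
  finally show ?thesis by simp
qed

lemma T_Y: "T * Y = X * T + c * Y"
proof -
  have "T * Y = (T * T) * X * T" unfolding Y_conj by (simp only: mult.assoc)
  also have "\<dots> = X * T + c * Y"
    unfolding Y_conj quadratic by (simp add: distrib_right mult.assoc)
  finally show ?thesis .
qed

lemma T_commute_sum: "T * (X + Y) = (X + Y) * T"
  using T_X T_Y by (simp add: distrib_left distrib_right)

lemma T_commute_prod: "T * (X * Y) = (X * Y) * T"
proof -
  have "T * (X * Y) = (Y * T - c * Y) * Y" using T_X by (simp flip: mult.assoc)
  also have "\<dots> = Y * (T * Y) - c * (Y * Y)" by (simp add: left_diff_distrib mult.assoc)
  also have "\<dots> = Y * X * T" using T_Y by (simp add: distrib_left c_left_commute mult.assoc)
  finally show ?thesis using X_Y by simp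
qed

text \<open>Newton's recursion \<open>p\<^sub>k\<^sub>+\<^sub>2 = e\<^sub>1 p\<^sub>k\<^sub>+\<^sub>1 - e\<^sub>2 p\<^sub>k\<close> for the power sums of \<open>X\<close> and \<open>Y\<close>.\<close>

lemma T_commute_power_sum: "T * (X ^ k + Y ^ k) = (X ^ k + Y ^ k) * T"
proof (induction k rule: less_induct)
  case (less k)
  consider "k = 0" | "k = 1" | j where "k = Suc (Suc j)"
    by (metis One_nat_def not0_implies_Suc)
  then show ?case
  proof cases
    case 1
    then show ?thesis by (simp add: mult_2 mult_2_right)
  next
    case 2
    then show ?thesis using T_commute_sum by simp
  next
    case 3
    have YX: "Y * X ^ n = X ^ n * Y" for n
      using power_commuting_commutes[OF X_Y] by simp
    define p1 where "p1 = X ^ Suc j + Y ^ Suc j"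
    define p0 where "p0 = X ^ j + Y ^ j"
    have newton: "X ^ k + Y ^ k = (X + Y) * p1 - (X * Y) * p0"
      unfolding p1_def p0_def using 3 YX[of j] YX[of "Suc j"] by (simp add: algebra_simps)
    have "T * p1 = p1 * T" and "T * p0 = p0 * T"
      unfolding p1_def p0_def using less.IH[of "Suc j"] less.IH[of j] 3 by simp_all
    then show ?thesis
      unfolding newton using T_commute_sum T_commute_prod
      by (simp add: left_diff_distrib right_diff_distrib) (metis mult.assoc)
  qed
qed

abbreviation Phi where "Phi \<equiv> T * (X - Y) + c * Y"

lemma
  shows Phi_Y: "Phi * Y = X * Phi"
    and Phi_square: "Phi * Phi = c * c * (X * Y) - (X - Y) * (X - Y)"
proof -
  have TX: "T * (X * Z) = Y * (T * Z) - c * (Y * Z)" for Z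
    using T_X by (metis mult.assoc left_diff_distrib)
  have TY: "T * (Y * Z) = X * (T * Z) + c * (Y * Z)" for Z
    using T_Y by (metis mult.assoc distrib_right)
  have TT: "T * (T * Z) = c * (T * Z) + Z" for Z
    using quadratic by (metis mult.assoc distrib_right mult_1_left)
  have YX: "Y * (X * Z) = X * (Y * Z)" for Z
    using X_Y by (metis mult.assoc)
  have Tc: "T * (c * Z) = c * (T * Z)" and Xc: "X * (c * Z) = c * (X * Z)"
    and Yc: "Y * (c * Z) = c * (Y * Z)" for Z
    by (simp_all only: c_left_commute)
  note rules = TX TY TT YX Tc Xc Yc T_X T_Y quadratic X_Y[symmetric]
    c_central[of T] c_central[of X] c_central[of Y]
  show "Phi * Y = X * Phi" by (simp add: algebra_simps rules)
  show "Phi * Phi = c * c * (X * Y) - (X - Y) * (X - Y)" by (simp add: algebra_simps rules)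
qed

lemma minus_Phi_square: "- (Phi * Phi) = X * X - (c * c + 2) * (X * Y) + Y * Y"
  unfolding Phi_square using X_Y by (simp add: algebra_simps mult_2)

end

text \<open>\<open>g(X) g(Y)\<close> is symmetric in \<open>X, Y\<close>: by induction on \<open>g\<close> it is built from power sums
  \<open>X\<^sup>k + Y\<^sup>k\<close> and from \<open>X Y\<close>, all of which commute with \<open>T\<close>.\<close>

lemma quadratic_conjugate_commute_poly_op_pair:
  assumes "quadratic_conjugate T X Y c"
  shows "T * (poly_op g X * poly_op g Y) = (poly_op g X * poly_op g Y) * T"
proof -
  interpret quadratic_conjugate T X Y c by fact
  have sum: "T * (poly_op h X + poly_op h Y) = (poly_op h X + poly_op h Y) * T" for h
  proof -
    have "poly_op h X + poly_op h Y = (\<Sum>k\<le>degree h. scalar (coeff h k) * (X ^ k + Y ^ k))"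
      by (simp add: poly_op_altdef sum.distrib distrib_left)
    moreover have "T * (scalar (coeff h k) * (X ^ k + Y ^ k)) = scalar (coeff h k) * (X ^ k + Y ^ k) * T" for k
      using T_commute_power_sum[of k] by (metis mult.assoc scalar_commute)
    ultimately show ?thesis by (simp add: sum_distrib_left sum_distrib_right)
  qed
  show ?thesis
  proof (induction g)
    case (pCons a g)
    define gX gY where "gX = poly_op g X" and "gY = poly_op g Y"
    have gX_Y: "gX * Y = Y * gX"
      unfolding gX_def using poly_op_commute[of Y X g] X_Y by simp
    have "poly_op (pCons a g) X * poly_op (pCons a g) Y = (scalar a + X * gX) * (scalar a + Y * gY)"
      by (simp add: gX_def gY_def)
    also have "\<dots> = scalar a * scalar a + scalar a * (Y * gY) + (X * gX) * scalar a + X * (gX * Y) * gY"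
      by (simp add: distrib_left distrib_right mult.assoc)
    also have "\<dots> = scalar (a * a) + scalar a * (poly_op (pCons 0 g) X + poly_op (pCons 0 g) Y)
        + (X * Y) * (gX * gY)"
    proof -
      have "(X * gX) * scalar a = scalar a * (X * gX)"
        by (simp add: scalar_commute)
      then show ?thesis
        unfolding gX_Y by (simp add: gX_def gY_def scalar_mult scalar_zero distrib_left mult.assoc add_ac)
    qed
    finally have expand: "poly_op (pCons a g) X * poly_op (pCons a g) Y = \<dots>" .
    have "T * scalar (a * a) = scalar (a * a) * T"
      by (simp add: scalar_commute)
    moreover have "T * (scalar a * (poly_op (pCons 0 g) X + poly_op (pCons 0 g) Y)) =
        scalar a * (poly_op (pCons 0 g) X + poly_op (pCons 0 g) Y) * T"
      using sum[of "pCons 0 g"] by (metis mult.assoc scalar_commute)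
    moreover have "T * ((X * Y) * (gX * gY)) = (X * Y) * (gX * gY) * T"
      using pCons.IH T_commute_prod unfolding gX_def gY_def by (metis mult.assoc)
    ultimately show ?case
      unfolding expand by (simp only: distrib_left distrib_right)
  qed simp
qed

section \<open>The generators on the tensor space\<close>

definition s_word :: "nat \<Rightarrow> int list \<Rightarrow> int list" where
  "s_word i u = (if i = 0 then u[0 := - (u!0)] else u[i-1 := u!i, i := u!(i-1)])"

text \<open>\<open>T_fun Q q d i\<close> is the right action of \<open>T\<^sub>i\<close> on \<open>V\<^sub>n\<^sup>\<otimes>\<^sup>d\<close>, uniformly in \<open>n\<close>.  On words of
  length \<open>\<noteq> d\<close> it acts by the scalar \<open>Q\<^sup>-\<^sup>1\<close> resp. \<open>q\<^sup>-\<^sup>1\<close>, so that the defining relations of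
  \<open>\<H>\<^sup>B\<^sub>Q\<^sub>,\<^sub>q(d)\<close> hold on the whole function space.\<close>

definition T_fun :: "'k::field \<Rightarrow> 'k \<Rightarrow> nat \<Rightarrow> nat \<Rightarrow> (int list \<Rightarrow> 'k) \<Rightarrow> (int list \<Rightarrow> 'k)" where
  "T_fun Q q d i f u = (if length u = d \<and> i < d then
     (if i = 0 then (if u!0 = 0 then inverse Q * f u
                     else (if u!0 < 0 then (inverse Q - Q) * f u else 0) + f (s_word 0 u))
      else (if u!(i-1) = u!i then inverse q * f u
            else (if u!(i-1) > u!i then (inverse q - q) * f u else 0) + f (s_word i u)))
   else (if i = 0 then inverse Q else inverse q) * f u)"

lift_definition T_op :: "'k::field \<Rightarrow> 'k \<Rightarrow> nat \<Rightarrow> nat \<Rightarrow> 'k linop" is T_fun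
  unfolding is_linop_def T_fun_def by (simp add: fun_eq_iff algebra_simps)

fun K_op :: "'k::field \<Rightarrow> 'k \<Rightarrow> nat \<Rightarrow> nat \<Rightarrow> 'k linop" where
  "K_op Q q d 0 = 1"
| "K_op Q q d (Suc i) = (if i = 0 then T_op Q q d 0 else T_op Q q d i * K_op Q q d i * T_op Q q d i)"

lemma length_s_word [simp]: "length (s_word i u) = length u"
  by (simp add: s_word_def)

lemma s_word_0_nth: "0 < length u \<Longrightarrow> s_word 0 u ! k = (if k = 0 then - (u!0) else u!k)"
  by (simp add: s_word_def nth_list_update)

lemma s_word_Suc_nth:
  "Suc i < length u \<Longrightarrow> s_word (Suc i) u ! k = (if k = i then u ! Suc i else if k = Suc i then u ! i else u ! k)"
  by (simp add: s_word_def nth_list_update)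

lemma s_word_s_word [simp]: "i < length u \<Longrightarrow> s_word i (s_word i u) = u"
proof (cases i)
  case (Suc k)
  then show "i < length u \<Longrightarrow> ?thesis"
    by (intro nth_equalityI) (simp_all add: s_word_Suc_nth)
qed (simp add: s_word_def)

lemma s_word_eq_iff: "i < length w \<Longrightarrow> s_word i w = w \<longleftrightarrow> (if i = 0 then w!0 = 0 else w!(i-1) = w!i)"
proof (cases i)
  case (Suc j)
  assume "i < length w"
  then show ?thesis
    using Suc by (auto simp: s_word_Suc_nth list_eq_iff_nth_eq dest: spec[of _ j])
qed (simp add: s_word_def list_update_same_conv)

lemma app_T_op: "app (T_op Q q d i) = T_fun Q q d i"
  by transfer simp

lemma T_fun_out:
  "\<not> (length u = d \<and> i < d) \<Longrightarrow> T_fun Q q d i f u = (if i = 0 then inverse Q else inverse q) * f u"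
  unfolding T_fun_def by (rule if_not_P)

lemma T_fun_0: "length u = d \<Longrightarrow> 0 < d \<Longrightarrow> T_fun Q q d 0 f u =
   (if u!0 = 0 then inverse Q * f u else (if u!0 < 0 then (inverse Q - Q) * f u else 0) + f (s_word 0 u))"
  by (simp add: T_fun_def)

lemma T_fun_Suc: "length u = d \<Longrightarrow> Suc i < d \<Longrightarrow> T_fun Q q d (Suc i) f u =
   (if u!i = u!Suc i then inverse q * f u
    else (if u!i > u!Suc i then (inverse q - q) * f u else 0) + f (s_word (Suc i) u))"
  by (simp add: T_fun_def)

lemma T_op_0_quadratic:
  assumes "Q \<noteq> 0"
  shows "T_op Q q d 0 * T_op Q q d 0 = scalar (inverse Q - Q) * T_op Q q d 0 + 1"
proof (rule linop_eqI)
  fix f u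
  show "app (T_op Q q d 0 * T_op Q q d 0) f u = app (scalar (inverse Q - Q) * T_op Q q d 0 + 1) f u"
  proof (cases "length u = d \<and> 0 < d")
    case True
    then show ?thesis using assms
      by (simp add: app_times app_plus app_scalar app_one app_T_op T_fun_0 s_word_0_nth algebra_simps)
  next
    case False
    then show ?thesis using assms
      by (simp add: app_times app_plus app_scalar app_one app_T_op T_fun_out field_simps)
  qed
qed

lemma T_op_Suc_quadratic:
  assumes "q \<noteq> 0"
  shows "T_op Q q d (Suc i) * T_op Q q d (Suc i) = scalar (inverse q - q) * T_op Q q d (Suc i) + 1"
proof (rule linop_eqI)
  fix f u
  show "app (T_op Q q d (Suc i) * T_op Q q d (Suc i)) f u =
      app (scalar (inverse q - q) * T_op Q q d (Suc i) + 1) f u"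
  proof (cases "length u = d \<and> Suc i < d")
    case True
    then show ?thesis using assms
      by (simp add: app_times app_plus app_scalar app_one app_T_op T_fun_Suc s_word_Suc_nth algebra_simps)
  next
    case False
    then show ?thesis using assms
      by (simp add: app_times app_plus app_scalar app_one app_T_op T_fun_out field_simps)
  qed
qed

lemma s_word_braid: "Suc (Suc k) < length u \<Longrightarrow>
  s_word (Suc k) (s_word (Suc (Suc k)) (s_word (Suc k) u)) =
   s_word (Suc (Suc k)) (s_word (Suc k) (s_word (Suc (Suc k)) u))"
  by (rule nth_equalityI) (auto simp: s_word_Suc_nth)

lemma T_op_braid:
  assumes "q \<noteq> 0" "Suc (Suc k) < d"
  shows "T_op Q q d (Suc k) * T_op Q q d (Suc (Suc k)) * T_op Q q d (Suc k) =
         T_op Q q d (Suc (Suc k)) * T_op Q q d (Suc k) * T_op Q q d (Suc (Suc k))"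
proof (rule linop_eqI)
  fix f u
  show "app (T_op Q q d (Suc k) * T_op Q q d (Suc (Suc k)) * T_op Q q d (Suc k)) f u =
        app (T_op Q q d (Suc (Suc k)) * T_op Q q d (Suc k) * T_op Q q d (Suc (Suc k))) f u"
  proof (cases "length u = d")
    case True
    then have l: "Suc (Suc k) < length u" using assms by simp
    obtain x y z where xyz: "u!k = x" "u!Suc k = y" "u!Suc (Suc k) = z" by blast
    show ?thesis using True l assms xyz
      by (cases x y rule: linorder_cases; cases y z rule: linorder_cases; cases x z rule: linorder_cases)
         (simp_all add: app_times app_T_op T_fun_Suc s_word_Suc_nth s_word_braid algebra_simps,
          simp_all add: field_simps)
  qed (use assms in \<open>simp add: app_times app_T_op T_fun_out\<close>)
qed

lemma s_word_type_B: "Suc 0 < length u \<Longrightarrow>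
  s_word 0 (s_word (Suc 0) (s_word 0 (s_word (Suc 0) u))) = s_word (Suc 0) (s_word 0 (s_word (Suc 0) (s_word 0 u)))"
proof -
  assume "Suc 0 < length u"
  then have "0 < length u" "u \<noteq> []" by auto
  then show ?thesis using \<open>Suc 0 < length u\<close>
    by (intro nth_equalityI) (auto simp: s_word_Suc_nth s_word_0_nth)
qed

lemma T_op_type_B:
  assumes "q \<noteq> 0" "Q \<noteq> 0" "Suc 0 < d"
  shows "T_op Q q d 0 * T_op Q q d (Suc 0) * T_op Q q d 0 * T_op Q q d (Suc 0) =
         T_op Q q d (Suc 0) * T_op Q q d 0 * T_op Q q d (Suc 0) * T_op Q q d 0"
proof (rule linop_eqI)
  fix f u
  show "app (T_op Q q d 0 * T_op Q q d (Suc 0) * T_op Q q d 0 * T_op Q q d (Suc 0)) f u =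
        app (T_op Q q d (Suc 0) * T_op Q q d 0 * T_op Q q d (Suc 0) * T_op Q q d 0) f u"
  proof (cases "length u = d")
    case True
    then have l: "Suc 0 < length u" "0 < length u" using assms by simp_all
    obtain x y where xy: "u!0 = x" "u!Suc 0 = y" by blast
    show ?thesis using True l assms xy
      by (cases x "0::int" rule: linorder_cases; cases y "0::int" rule: linorder_cases;
          cases x y rule: linorder_cases; cases x "-y" rule: linorder_cases)
         (simp_all add: app_times app_T_op T_fun_Suc T_fun_0 s_word_Suc_nth s_word_0_nth s_word_type_B
           algebra_simps, simp_all add: field_simps)
  qed (use assms in \<open>simp add: app_times app_T_op T_fun_out\<close>)
qed

lemma T_op_commute_Suc:
  assumes "Suc i < j" "Suc j < d"
  shows "T_op Q q d (Suc i) * T_op Q q d (Suc j) = T_op Q q d (Suc j) * T_op Q q d (Suc i)"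
proof (rule linop_eqI)
  fix f u
  have "Suc j < length u \<Longrightarrow> s_word (Suc j) (s_word (Suc i) u) = s_word (Suc i) (s_word (Suc j) u)"
    using assms by (intro nth_equalityI) (auto simp: s_word_Suc_nth)
  then show "app (T_op Q q d (Suc i) * T_op Q q d (Suc j)) f u = app (T_op Q q d (Suc j) * T_op Q q d (Suc i)) f u"
    using assms
    by (cases "length u = d") (auto simp: app_times app_T_op T_fun_Suc T_fun_out s_word_Suc_nth algebra_simps)
qed

lemma T_op_commute_0:
  assumes "0 < j" "Suc j < d"
  shows "T_op Q q d 0 * T_op Q q d (Suc j) = T_op Q q d (Suc j) * T_op Q q d 0"
proof (rule linop_eqI)
  fix f u
  have "s_word (Suc j) (s_word 0 u) = s_word 0 (s_word (Suc j) u)" if "Suc j < length u"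
  proof -
    have "0 < length u" "u \<noteq> []" using that by auto
    then show ?thesis using assms that
      by (intro nth_equalityI) (auto simp: s_word_Suc_nth s_word_0_nth)
  qed
  then show "app (T_op Q q d 0 * T_op Q q d (Suc j)) f u = app (T_op Q q d (Suc j) * T_op Q q d 0) f u"
    using assms
    by (cases "length u = d")
       (auto simp: app_times app_T_op T_fun_Suc T_fun_0 T_fun_out s_word_Suc_nth s_word_0_nth algebra_simps)
qed

lemma Jn_uminus: "a \<in> Jn n \<Longrightarrow> - a \<in> Jn n"
proof -
  assume "a \<in> Jn n"
  moreover have "- a + int n - 1 = (a + int n - 1) - 2 * a" by simp
  ultimately show ?thesis by (auto simp: Jn_def)
qed

lemma finite_W: "finite (W n d)"
proof -
  have "Jn n \<subseteq> {- int n .. int n}" by (auto simp: Jn_def)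
  then have "finite (Jn n)" by (rule finite_subset) simp
  moreover have "W n d = {xs. set xs \<subseteq> Jn n \<and> length xs = d}" by (auto simp: W_def)
  ultimately show ?thesis using finite_lists_length_eq by simp
qed

lemma s_word_in_W:
  assumes i: "i < d" and u: "u \<in> W n d"
  shows "s_word i u \<in> W n d"
proof -
  have l: "length u = d" and s: "set u \<subseteq> Jn n" using u by (auto simp: W_def)
  have "s_word i u ! k \<in> Jn n" if k: "k < length u" for k
  proof (cases i)
    case 0
    have l0: "0 < length u" using k by arith
    then have "u ! 0 \<in> Jn n" "u ! k \<in> Jn n" using k s nth_mem by blast+
    then show ?thesis
      using 0 by (simp add: s_word_0_nth[OF l0] Jn_uminus)
  next
    case (Suc j)
    then show ?thesis using k s i l by (auto simp: s_word_Suc_nth)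
  qed
  then show ?thesis using l by (auto simp: W_def set_conv_nth)
qed

lemma s_word_in_W_iff: "i < d \<Longrightarrow> s_word i u \<in> W n d \<longleftrightarrow> u \<in> W n d"
proof
  assume "i < d" "s_word i u \<in> W n d"
  moreover have "length u = d" using \<open>s_word i u \<in> W n d\<close> by (simp add: W_def)
  ultimately show "u \<in> W n d" using s_word_in_W[of i d "s_word i u"] by simp
qed (rule s_word_in_W)

definition coef_diag :: "'k::field \<Rightarrow> 'k \<Rightarrow> nat \<Rightarrow> int list \<Rightarrow> 'k" where
  "coef_diag Q q i w = (if i = 0 then (if w!0 = 0 then inverse Q else if w!0 < 0 then inverse Q - Q else 0)
     else (if w!(i-1) = w!i then inverse q else if w!(i-1) > w!i then inverse q - q else 0))"

lemma coef_eq: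
  assumes "i < length w"
  shows "coef Q q i w u =
    (if u = w then coef_diag Q q i w else 0) + (if u = s_word i w \<and> s_word i w \<noteq> w then 1 else 0)"
proof (cases i)
  case 0
  have e: "s_word 0 w = w \<longleftrightarrow> w!0 = 0" using s_word_eq_iff[of 0 w] assms 0 by simp
  have s: "w[0 := - (w!0)] = s_word 0 w" by (simp add: s_word_def)
  show ?thesis unfolding 0 coef_def coef_diag_def Let_def s
    using e by (cases "w!0 = 0"; cases "w!0 < 0") simp_all
next
  case (Suc j)
  have e: "s_word i w = w \<longleftrightarrow> w!j = w!Suc j" using s_word_eq_iff[of i w] assms Suc by simp
  have s: "w[j := w ! Suc j, Suc j := w ! j] = s_word i w" by (simp add: s_word_def Suc)
  show ?thesis unfolding Suc coef_def coef_diag_def Let_def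
    using e s Suc by (cases "w!j = w!Suc j"; cases "w!j < w!Suc j") simp_all
qed

lemma act_apply:
  assumes f: "f \<in> Tens n d" and i: "i < d"
  shows "act Q q n d i f u =
    (if u \<in> W n d then coef_diag Q q i u * f u + (if s_word i u = u then 0 else f (s_word i u)) else 0)"
proof -
  have "f w * coef Q q i w u =
      (if w = u then coef_diag Q q i u * f u else 0) + (if w = s_word i u \<and> s_word i u \<noteq> u then f w else 0)"
    if w: "w \<in> W n d" for w
  proof -
    have lw: "i < length w" using i w by (simp add: W_def)
    then have "u = s_word i w \<and> s_word i w \<noteq> w \<longleftrightarrow> w = s_word i u \<and> s_word i u \<noteq> u"
      by (metis length_s_word s_word_s_word)
    then show ?thesis unfolding coef_eq[OF lw] by (auto simp: distrib_left)
  qed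
  then have "act Q q n d i f u = (\<Sum>w\<in>W n d. (if w = u then coef_diag Q q i u * f u else 0)
      + (if w = s_word i u \<and> s_word i u \<noteq> u then f w else 0))"
    unfolding act_def by (intro sum.cong) auto
  also have "\<dots> = (if u \<in> W n d then coef_diag Q q i u * f u else 0)
      + (if s_word i u \<noteq> u \<and> s_word i u \<in> W n d then f (s_word i u) else 0)"
    by (cases "s_word i u = u") (simp_all add: sum.distrib finite_W)
  finally show ?thesis using s_word_in_W_iff[OF i] by auto
qed

lemma act_eq_T_op:
  assumes f: "f \<in> Tens n d" and i: "i < d"
  shows "act Q q n d i f = app (T_op Q q d i) f"
proof
  fix u
  show "act Q q n d i f u = app (T_op Q q d i) f u"
  proof (cases "u \<in> W n d")
    case True
    then have l: "length u = d" "i < length u" using i by (auto simp: W_def)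
    then show ?thesis
      unfolding act_apply[OF f i] using True i s_word_eq_iff[OF l(2)]
      by (cases i) (auto simp: app_T_op T_fun_0 T_fun_Suc coef_diag_def)
  next
    case False
    then have "f u = 0" "f (s_word i u) = 0"
      using f s_word_in_W_iff[OF i] by (auto simp: Tens_def)
    then show ?thesis
      unfolding act_apply[OF f i] using False i
      by (cases "length u = d"; cases i) (simp_all add: app_T_op T_fun_0 T_fun_Suc T_fun_out)
  qed
qed

lemma T_op_Tens: "f \<in> Tens n d \<Longrightarrow> i < d \<Longrightarrow> app (T_op Q q d i) f \<in> Tens n d"
  by (simp add: Tens_def act_apply flip: act_eq_T_op)

lemma fold_act_eq_prod_list_T_op:
  "f \<in> Tens n d \<Longrightarrow> set js \<subseteq> {..<d} \<Longrightarrow>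
    fold (\<lambda>j g. act Q q n d j g) js f = app (prod_list (map (T_op Q q d) js)) f"
  by (induction js arbitrary: f) (simp_all add: app_one app_times act_eq_T_op T_op_Tens)

lemma K_op_eq_prod_list:
  "1 \<le> i \<Longrightarrow> K_op Q q d i = prod_list (map (T_op Q q d) (rev [1..<i] @ 0 # [1..<i]))"
  by (induction i rule: nat_induct_at_least) (simp_all add: mult.assoc)

lemma Kact_eq_K_op:
  assumes "f \<in> Tens n d" "1 \<le> i" "i \<le> d"
  shows "Kact Q q n d i f = app (K_op Q q d i) f"
  using assms unfolding Kact_def K_op_eq_prod_list[OF assms(2)]
  by (intro fold_act_eq_prod_list_T_op) auto

locale hecke_tensor =
  fixes Q q :: "'k::field" and d :: nat
  assumes Q_nonzero: "Q \<noteq> 0" and q_nonzero: "q \<noteq> 0"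
begin

abbreviation T where "T \<equiv> T_op Q q d"
abbreviation K where "K \<equiv> K_op Q q d"

lemma T_commute:
  assumes "i + 1 < j" "j < d"
  shows "T i * T j = T j * T i"
proof -
  obtain j' where j: "j = Suc j'" using assms by (cases j) auto
  show ?thesis
    using assms T_op_commute_0[of j' d Q q] T_op_commute_Suc[of _ j' d Q q] j by (cases i) auto
qed

lemma K_Suc: "1 \<le> i \<Longrightarrow> K (Suc i) = T i * K i * T i"
  by simp

lemma commute_K_of_commute_T:
  assumes "\<forall>j<d. B * T j = T j * B" "i \<le> d"
  shows "B * K i = K i * B"
  using assms(2)
proof (induction i)
  case (Suc i)
  have BT: "B * T i = T i * B" using assms(1) Suc.prems by simp
  show ?case
  proof (cases "i = 0")
    case False
    have "B * K (Suc i) = (B * T i) * K i * T i" using False by (simp add: mult.assoc)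
    also have "\<dots> = T i * (B * K i) * T i" using BT by (simp add: mult.assoc)
    also have "\<dots> = T i * K i * (B * T i)" using Suc by (simp add: mult.assoc)
    also have "\<dots> = K (Suc i) * B" using BT False by (simp add: mult.assoc)
    finally show ?thesis .
  qed (use BT in simp)
qed simp

lemma T_K_commute_above: "i < j \<Longrightarrow> j < d \<Longrightarrow> T j * K i = K i * T j"
proof (induction i)
  case (Suc i)
  show ?case
  proof (cases "i = 0")
    case False
    have c1: "T j * T i = T i * T j" using T_commute[of i j] Suc.prems by simp
    have c2: "T j * K i = K i * T j" using Suc by simp
    have "T j * K (Suc i) = T j * T i * K i * T i" using False by (simp add: mult.assoc)
    also have "\<dots> = T i * K i * T i * T j" using c1 c2 by (simp add: mult.assoc)
    also have "\<dots> = K (Suc i) * T j" using False by simp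
    finally show ?thesis .
  qed (use Suc.prems T_commute[of 0 j] in simp)
qed simp

lemma T_0_K_commute: "i \<le> d \<Longrightarrow> T 0 * K i = K i * T 0"
proof (induction i)
  case (Suc i)
  consider "i = 0" | "i = 1" | "2 \<le> i" by linarith
  then show ?case
  proof cases
    case 2
    then show ?thesis
      using T_op_type_B[OF q_nonzero Q_nonzero, of d] Suc.prems by (simp add: mult.assoc)
  next
    case 3
    have c1: "T 0 * T i = T i * T 0" using T_commute[of 0 i] Suc.prems 3 by simp
    have c2: "T 0 * K i = K i * T 0" using Suc by simp
    have "T 0 * K (Suc i) = T 0 * T i * K i * T i" using 3 by (simp add: mult.assoc)
    also have "\<dots> = T i * K i * T i * T 0" using c1 c2 by (simp add: mult.assoc)
    also have "\<dots> = K (Suc i) * T 0" using 3 by simp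
    finally show ?thesis .
  qed simp
qed simp

lemma T_K_commute_below: "j + 2 \<le> i \<Longrightarrow> i \<le> d \<Longrightarrow> T j * K i = K i * T j"
proof (induction i)
  case (Suc i)
  show ?case
  proof (cases "j = 0")
    case False
    have Ki: "K (Suc i) = T i * K i * T i" using Suc.prems by simp
    show ?thesis
    proof (cases "j + 2 \<le> i")
      case True
      have c1: "T j * T i = T i * T j" using T_commute[of j i] Suc.prems True by simp
      have c2: "T j * K i = K i * T j" using Suc.IH Suc.prems True by simp
      have "T j * K (Suc i) = (T j * T i) * K i * T i" unfolding Ki by (simp only: mult.assoc)
      also have "\<dots> = T i * (T j * K i) * T i" unfolding c1 by (simp only: mult.assoc)
      also have "\<dots> = T i * K i * (T j * T i)" unfolding c2 by (simp only: mult.assoc)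
      also have "\<dots> = K (Suc i) * T j" unfolding c1 Ki by (simp only: mult.assoc)
      finally show ?thesis .
    next
      case False
      then have ij: "i = Suc j" using Suc.prems by simp
      obtain k where k: "j = Suc k" using \<open>j \<noteq> 0\<close> not0_implies_Suc by blast
      have braid: "T j * T i * T j = T i * T j * T i"
        using T_op_braid[OF q_nonzero, of k d Q] Suc.prems k ij by simp
      have Ti_Kj: "T i * K j = K j * T i" using T_K_commute_above[of j i] Suc.prems ij by simp
      have Kj: "K i = T j * K j * T j" using ij \<open>j \<noteq> 0\<close> by simp
      have "T j * K (Suc i) = (T j * T i * T j) * K j * T j * T i" unfolding Ki Kj by (simp only: mult.assoc)
      also have "\<dots> = T i * T j * (T i * K j) * T j * T i" unfolding braid by (simp only: mult.assoc)
      also have "\<dots> = T i * T j * K j * (T i * T j * T i)" unfolding Ti_Kj by (simp only: mult.assoc)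
      also have "\<dots> = T i * T j * K j * (T j * T i * T j)" unfolding braid ..
      also have "\<dots> = K (Suc i) * T j" unfolding Ki Kj by (simp only: mult.assoc)
      finally show ?thesis .
    qed
  qed (use T_0_K_commute Suc.prems in blast)
qed simp

lemma K_commute_less: "j < i \<Longrightarrow> i \<le> d \<Longrightarrow> K i * K j = K j * K i"
proof (induction j)
  case (Suc j)
  show ?case
  proof (cases "j = 0")
    case False
    have Kj: "K (Suc j) = T j * K j * T j" using False by simp
    have c1: "K i * T j = T j * K i" using T_K_commute_below[of j i] Suc.prems by simp
    have c2: "K i * K j = K j * K i" using Suc by simp
    have "K i * K (Suc j) = (K i * T j) * K j * T j" unfolding Kj by (simp only: mult.assoc)
    also have "\<dots> = T j * (K i * K j) * T j" unfolding c1 by (simp only: mult.assoc)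
    also have "\<dots> = T j * K j * (K i * T j)" unfolding c2 by (simp only: mult.assoc)
    also have "\<dots> = K (Suc j) * K i" unfolding c1 Kj by (simp only: mult.assoc)
    finally show ?thesis .
  qed (use T_0_K_commute[of i] Suc.prems in simp)
qed simp

lemma K_commute: "i \<le> d \<Longrightarrow> j \<le> d \<Longrightarrow> K i * K j = K j * K i"
  using K_commute_less[of i j] K_commute_less[of j i] by (cases i j rule: linorder_cases) auto

lemma quadratic_conjugate_K:
  assumes "1 \<le> i" "i < d"
  shows "quadratic_conjugate (T i) (K i) (K (Suc i)) (scalar (inverse q - q))"
proof
  obtain i' where i': "i = Suc i'" using assms by (cases i) auto
  show "T i * T i = scalar (inverse q - q) * T i + 1"
    unfolding i' by (rule T_op_Suc_quadratic[OF q_nonzero])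
  show "K (Suc i) = T i * K i * T i" using K_Suc[OF assms(1)] .
  show "K i * K (Suc i) = K (Suc i) * K i" by (rule K_commute) (use assms in simp_all)
qed (rule scalar_commute[symmetric])

inductive_set hecke :: "'k linop set" where
  T: "j < d \<Longrightarrow> T j \<in> hecke"
| scalar: "scalar c \<in> hecke"
| add: "A \<in> hecke \<Longrightarrow> B \<in> hecke \<Longrightarrow> A + B \<in> hecke"
| mult: "A \<in> hecke \<Longrightarrow> B \<in> hecke \<Longrightarrow> A * B \<in> hecke"

lemma hecke_one: "1 \<in> hecke"
  using hecke.scalar[of 1] by (simp add: scalar_one)

lemma hecke_diff: "A \<in> hecke \<Longrightarrow> B \<in> hecke \<Longrightarrow> A - B \<in> hecke"
  using hecke.add[OF _ hecke.mult[OF hecke.scalar[of "-1"]], of A B]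
  by (simp add: scalar_minus scalar_one)

lemma hecke_poly_op: "A \<in> hecke \<Longrightarrow> poly_op p A \<in> hecke"
  by (induction p) (auto simp flip: scalar_zero intro: hecke.intros)

lemma hecke_K: "i \<le> d \<Longrightarrow> K i \<in> hecke"
  by (induction i) (simp_all add: hecke_one hecke.T hecke.mult)

definition invariant :: "(int list \<Rightarrow> 'k) set \<Rightarrow> bool" where
  "invariant S \<longleftrightarrow> (\<lambda>x. 0) \<in> S \<and> (\<forall>v\<in>S. \<forall>w\<in>S. (\<lambda>x. v x + w x) \<in> S) \<and>
     (\<forall>c. \<forall>v\<in>S. (\<lambda>x. c * v x) \<in> S) \<and> (\<forall>v\<in>S. \<forall>j<d. app (T j) v \<in> S)"

lemma invariant_add: "invariant U \<Longrightarrow> v \<in> U \<Longrightarrow> w \<in> U \<Longrightarrow> (\<lambda>x. v x + w x) \<in> U"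
  by (simp add: invariant_def)

lemma invariant_zero: "invariant {\<lambda>x. 0}"
  by (simp add: invariant_def app_zero_fun)

lemma invariant_UNIV: "invariant UNIV"
  by (simp add: invariant_def)

lemma invariant_Tens: "invariant (Tens n d)"
  unfolding invariant_def using T_op_Tens[of _ n d _ Q q] by (simp add: Tens_def)

lemma app_hecke_mem: "A \<in> hecke \<Longrightarrow> invariant S \<Longrightarrow> v \<in> S \<Longrightarrow> app A v \<in> S"
  by (induction A arbitrary: v rule: hecke.induct)
     (simp_all add: invariant_def app_scalar app_plus app_times)

lemma invariant_iff_submodule:
  assumes "S \<subseteq> Tens n d"
  shows "invariant S \<longleftrightarrow> submodule Q q d n S"
proof -
  have "act Q q n d j v = app (T j) v" if "v \<in> S" "j < d" for v j
    using act_eq_T_op that assms by blast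
  then show ?thesis using assms by (auto simp: invariant_def submodule_def)
qed

lemma hom_commute_hecke:
  assumes A: "A \<in> hecke" and \<phi>: "\<phi> \<in> HomH Q q d n m" and f: "f \<in> Tens n d"
  shows "\<phi> (app A f) = app A (\<phi> f)"
  using A f
proof (induction A arbitrary: f rule: hecke.induct)
  case (T j)
  have "\<phi> f \<in> Tens m d" and "\<phi> (act Q q n d j f) = act Q q m d j (\<phi> f)"
    using \<phi> T unfolding HomH_def by blast+
  then show ?case
    using act_eq_T_op[of f n d j Q q] act_eq_T_op[of "\<phi> f" m d j Q q] T by simp
next
  case (add A B)
  then show ?case
    using \<phi> app_hecke_mem[OF _ invariant_Tens] by (simp add: HomH_def app_plus)
next
  case (mult A B)
  then show ?case
    using app_hecke_mem[OF _ invariant_Tens] by (simp add: app_times)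
qed (use \<phi> in \<open>simp add: HomH_def app_scalar\<close>)

lemma hom_zero:
  assumes "\<phi> \<in> HomH Q q d n m"
  shows "\<phi> (\<lambda>x. 0) = (\<lambda>x. 0)"
proof -
  have z: "(\<lambda>x. 0) \<in> Tens n d" by (simp add: Tens_def)
  have "\<forall>c. \<forall>f\<in>Tens n d. \<phi> (\<lambda>w. c * f w) = (\<lambda>w. c * \<phi> f w)"
    using assms by (simp add: HomH_def)
  from this[rule_format, OF z, of 0] show ?thesis by simp
qed

lemma image_app_plus:
  "invariant U \<Longrightarrow> app A ` M \<subseteq> U \<Longrightarrow> app B ` M \<subseteq> U \<Longrightarrow> app (A + B) ` M \<subseteq> U"
  by (auto simp: invariant_def app_plus)

lemma image_app_uminus:
  assumes "invariant U" "app A ` M \<subseteq> U"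
  shows "app (- A) ` M \<subseteq> U"
proof
  fix x assume "x \<in> app (- A) ` M"
  then obtain v where "v \<in> M" "x = app (- A) v" by blast
  moreover have "(\<lambda>w. (- 1) * app A v w) \<in> U"
    using assms \<open>v \<in> M\<close> unfolding invariant_def by blast
  ultimately show "x \<in> U" by (simp add: app_uminus)
qed

lemma image_app_diff:
  "invariant U \<Longrightarrow> app A ` M \<subseteq> U \<Longrightarrow> app B ` M \<subseteq> U \<Longrightarrow> app (A - B) ` M \<subseteq> U"
  using image_app_plus[of U A M "- B"] image_app_uminus[of U B M] by simp

lemma image_app_hecke_left:
  "invariant M \<Longrightarrow> C \<in> hecke \<Longrightarrow> app A ` M \<subseteq> U \<Longrightarrow> app (C * A) ` M \<subseteq> U"
  by (auto simp: app_times intro: app_hecke_mem)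

lemma image_app_hecke_right:
  "invariant U \<Longrightarrow> C \<in> hecke \<Longrightarrow> app A ` M \<subseteq> U \<Longrightarrow> app (A * C) ` M \<subseteq> U"
  by (auto simp: app_times intro: app_hecke_mem)

end

section \<open>Spectral bounds for \<open>K\<^sub>i\<close>\<close>

text \<open>Expanding \<open>\<Prod>\<^sub>r (h - a\<^sub>r g\<^sub>r)\<close>, every term but \<open>\<plusminus>\<Prod>\<^sub>r a\<^sub>r g\<^sub>r\<close> has a factor \<open>h\<close>.\<close>

lemma ideal_prod_list_diff:
  fixes J :: "'a::ring_1 \<Rightarrow> bool" and C :: "'a set"
  assumes J_diff: "\<And>A B. J A \<Longrightarrow> J B \<Longrightarrow> J (A - B)"
    and J_mult: "\<And>E A. E \<in> C \<Longrightarrow> J A \<Longrightarrow> J (E * A)"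
    and C_diff: "\<And>A B. A \<in> C \<Longrightarrow> B \<in> C \<Longrightarrow> A - B \<in> C"
    and C_mult: "\<And>A B. A \<in> C \<Longrightarrow> B \<in> C \<Longrightarrow> A * B \<in> C" and C_one: "1 \<in> C"
    and C_commute: "\<And>A B. A \<in> C \<Longrightarrow> B \<in> C \<Longrightarrow> A * B = B * A"
    and h: "h \<in> C" "J h" and ag: "\<And>r. r \<in> set rs \<Longrightarrow> a r \<in> C \<and> g r \<in> C"
    and J_prod: "J (prod_list (map a rs))"
  shows "J (prod_list (map (\<lambda>r. h - a r * g r) rs))"
proof -
  have C_prod: "prod_list (map f xs) \<in> C" if "\<And>x. x \<in> set xs \<Longrightarrow> f x \<in> C" for f :: "'b \<Rightarrow> 'a" and xs
    using that by (induction xs) (auto intro: C_mult C_one)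
  have "J (E * prod_list (map (\<lambda>r. h - a r * g r) rs))"
    if "E \<in> C" "J (E * prod_list (map a rs))" for E
    using that ag
  proof (induction rs arbitrary: E)
    case (Cons r rs)
    define P H where "P = prod_list (map a rs)" and "H = prod_list (map (\<lambda>r. h - a r * g r) rs)"
    have C: "P \<in> C" "H \<in> C" "a r \<in> C" "g r \<in> C"
      unfolding P_def H_def using Cons.prems(3) h by (auto intro!: C_prod C_diff C_mult)
    have "J ((E * H) * h)"
      using J_mult[OF C_mult[OF Cons.prems(1) C(2)] h(2)] C_commute[OF C(2) h(1)] by (simp add: mult.assoc)
    moreover have "J ((E * a r * g r) * H)"
    proof -
      have "(E * a r * g r) * P = (g r * (E * a r)) * P"
        using C_commute[OF C_mult[OF Cons.prems(1) C(3)] C(4)] by simp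
      then have "(E * a r * g r) * P = g r * (E * (a r * P))"
        by (simp only: mult.assoc)
      then have "J ((E * a r * g r) * P)"
        using J_mult[OF C(4) Cons.prems(2)] by (simp add: P_def)
      moreover have "E * a r * g r \<in> C" using Cons.prems(1) C by (intro C_mult)
      ultimately show ?thesis
        unfolding H_def P_def using Cons.prems(3) by (intro Cons.IH) auto
    qed
    ultimately have "J ((E * H) * h - (E * a r * g r) * H)" by (rule J_diff)
    moreover have "(E * H) * h - (E * a r * g r) * H = E * ((h - a r * g r) * H)"
    proof -
      have "E * ((h - a r * g r) * H) = E * (h * H) - E * (a r * g r * H)"
        by (simp add: left_diff_distrib right_diff_distrib)
      also have "h * H = H * h" using C_commute[OF h(1) C(2)] .
      finally show ?thesis by (simp add: mult.assoc)
    qed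
    ultimately show ?case by (simp add: H_def)
  qed simp
  from this[of 1] show ?thesis using C_one J_prod by simp
qed

inductive_set alg_gen :: "'k::field linop \<Rightarrow> 'k linop \<Rightarrow> 'k linop set" for X Y where
  scalar: "scalar c \<in> alg_gen X Y"
| X: "X \<in> alg_gen X Y"
| Y: "Y \<in> alg_gen X Y"
| add: "A \<in> alg_gen X Y \<Longrightarrow> B \<in> alg_gen X Y \<Longrightarrow> A + B \<in> alg_gen X Y"
| mult: "A \<in> alg_gen X Y \<Longrightarrow> B \<in> alg_gen X Y \<Longrightarrow> A * B \<in> alg_gen X Y"

lemma alg_gen_one: "1 \<in> alg_gen X Y"
  using alg_gen.scalar[of 1] by (simp add: scalar_one)

lemma alg_gen_diff: "A \<in> alg_gen X Y \<Longrightarrow> B \<in> alg_gen X Y \<Longrightarrow> A - B \<in> alg_gen X Y"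
  using alg_gen.add[OF _ alg_gen.mult[OF alg_gen.scalar[of "-1"]], of A X Y B]
  by (simp add: scalar_minus scalar_one)

lemma alg_gen_poly_op: "A \<in> alg_gen X Y \<Longrightarrow> poly_op p A \<in> alg_gen X Y"
  by (induction p) (auto simp flip: scalar_zero intro: alg_gen.intros)

lemma alg_gen_commute:
  assumes XY: "X * Y = Y * X" and A: "A \<in> alg_gen X Y" and B: "B \<in> alg_gen X Y"
  shows "A * B = B * A"
proof -
  have gen: "X * A = A * X \<and> Y * A = A * Y" if "A \<in> alg_gen X Y" for A
    using that
  proof induction
    case (mult A B)
    then show ?case by (metis mult.assoc)
  qed (auto simp: XY scalar_commute distrib_left distrib_right)
  from B show ?thesis
  proof induction
    case (mult B1 B2)
    then show ?case by (metis mult.assoc)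
  qed (auto simp: gen[OF A] scalar_commute distrib_left distrib_right)
qed

definition q_spread :: "'k::field \<Rightarrow> 'k set \<Rightarrow> nat \<Rightarrow> 'k set" where
  "q_spread q B i = {b * q powi (2 * j) | b j. b \<in> B \<and> \<bar>j\<bar> < int i}"

lemma q_spread_mono: "i \<le> i' \<Longrightarrow> q_spread q B i \<subseteq> q_spread q B i'"
  unfolding q_spread_def by fastforce

lemma subset_q_spread_1: "B \<subseteq> q_spread q B 1"
  unfolding q_spread_def by (force intro: exI[of _ 0])

lemma q_spread_Suc:
  assumes q: "q \<noteq> 0" and r: "r \<in> q_spread q B i"
  shows "r * q\<^sup>2 \<in> q_spread q B (Suc i)" and "r * inverse (q\<^sup>2) \<in> q_spread q B (Suc i)"
proof -
  obtain b j where b: "b \<in> B" "\<bar>j\<bar> < int i" "r = b * q powi (2 * j)"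
    using r by (auto simp: q_spread_def)
  have "r * q\<^sup>2 = b * q powi (2 * (j + 1))"
    using q b(3) by (simp add: power_int_add algebra_simps)
  then show "r * q\<^sup>2 \<in> q_spread q B (Suc i)"
    unfolding q_spread_def using b by (intro CollectI exI[of _ b] exI[of _ "j + 1"]) auto
  have "r * inverse (q\<^sup>2) = b * q powi (2 * (j - 1))"
    using q b(3) by (simp add: power_int_diff field_simps)
  then show "r * inverse (q\<^sup>2) \<in> q_spread q B (Suc i)"
    unfolding q_spread_def using b by (intro CollectI exI[of _ b] exI[of _ "j - 1"]) auto
qed

lemma plus_eig_eq: "plus_eig Q q i = q_spread q {inverse Q} i"
  unfolding plus_eig_def q_spread_def by auto

lemma minus_eig_eq: "minus_eig Q q i = q_spread q {- Q} i"
  unfolding minus_eig_def q_spread_def by auto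

lemma poly_of_roots_q_pair:
  assumes "q \<noteq> 0"
  shows "poly_of_roots [r * q\<^sup>2, r * inverse (q\<^sup>2)] =
    [:r * r, - (((inverse q - q) * (inverse q - q) + 2) * r), 1:]"
proof -
  have "poly_of_roots [r * q\<^sup>2, r * inverse (q\<^sup>2)] =
      [:(r * q\<^sup>2) * (r * inverse (q\<^sup>2)), - (r * q\<^sup>2 + r * inverse (q\<^sup>2)), 1:]"
    by (simp add: poly_of_roots_def algebra_simps)
  also have "(r * q\<^sup>2) * (r * inverse (q\<^sup>2)) = r * r" using assms by (simp add: field_simps)
  also have "r * q\<^sup>2 + r * inverse (q\<^sup>2) = ((inverse q - q) * (inverse q - q) + 2) * r"
    using assms by (simp add: field_simps power2_eq_square)
  finally show ?thesis .
qed

lemma quadratic_elimination: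
  "(X * X - scalar e * (X * Y) + Y * Y) * poly_op F Y - (X - scalar r) * ((X + scalar r - scalar e * Y) * poly_op F Y)
    = poly_op ([:r * r, - (e * r), 1:] * F) Y"
proof -
  have "X * scalar r = scalar r * X" by (rule scalar_commute[symmetric])
  moreover have "X * (scalar e * Y) = scalar e * (X * Y)" by (rule scalar_commute_left[symmetric])
  moreover have "scalar r * scalar r = scalar (r * r)" by (rule scalar_mult[symmetric])
  moreover have "scalar r * (scalar e * Y) = scalar (e * r) * Y"
    by (metis mult.assoc mult.commute scalar_mult)
  ultimately have diff: "(X * X - scalar e * (X * Y) + Y * Y) - (X - scalar r) * (X + scalar r - scalar e * Y) =
      scalar (r * r) - scalar (e * r) * Y + Y * Y"
    by (simp add: left_diff_distrib right_diff_distrib distrib_left distrib_right)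
  have "(X * X - scalar e * (X * Y) + Y * Y) * poly_op F Y - (X - scalar r) * ((X + scalar r - scalar e * Y) * poly_op F Y)
      = ((X * X - scalar e * (X * Y) + Y * Y) - (X - scalar r) * (X + scalar r - scalar e * Y)) * poly_op F Y"
    by (simp only: left_diff_distrib mult.assoc)
  also have "\<dots> = (scalar (r * r) - scalar (e * r) * Y + Y * Y) * poly_op F Y"
    by (simp only: diff)
  also have "\<dots> = poly_op ([:r * r, - (e * r), 1:] * F) Y"
    by (simp add: poly_op_mult poly_op_quadratic scalar_minus del: mult_pCons_left poly_op_pCons)
  finally show ?thesis .
qed

context hecke_tensor
begin

text \<open>With \<open>c = q\<^sup>-\<^sup>1 - q\<close>, the intertwiner \<open>\<Phi> = T\<^sub>i (K\<^sub>i - K\<^sub>i\<^sub>+\<^sub>1) + c K\<^sub>i\<^sub>+\<^sub>1\<close> carries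
  \<open>F(K\<^sub>i)\<close> to \<open>F(K\<^sub>i\<^sub>+\<^sub>1)\<close>, and \<open>-\<Phi>\<^sup>2 = H(K\<^sub>i, K\<^sub>i\<^sub>+\<^sub>1)\<close> for \<open>H(x, y) = x\<^sup>2 - (c\<^sup>2 + 2) x y + y\<^sup>2\<close>.\<close>

lemma K_quadratic_annihilator:
  assumes M: "invariant M" and U: "invariant U" and i: "1 \<le> i" "i < d"
    and F: "app (poly_op F (K i)) ` M \<subseteq> U"
  shows "app ((K i * K i - scalar ((inverse q - q) * (inverse q - q) + 2) * (K i * K (Suc i))
    + K (Suc i) * K (Suc i)) * poly_op F (K (Suc i))) ` M \<subseteq> U"
proof -
  interpret quadratic_conjugate "T i" "K i" "K (Suc i)" "scalar (inverse q - q)"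
    using quadratic_conjugate_K[OF i] .
  have "Phi \<in> hecke"
    using i by (intro hecke.add hecke.mult hecke_diff hecke.T hecke.scalar hecke_K) auto
  then have "app (- (Phi * poly_op F (K i) * Phi)) ` M \<subseteq> U"
    using F by (intro image_app_uminus[OF U] image_app_hecke_right[OF U] image_app_hecke_left[OF M])
  also have "- (Phi * poly_op F (K i) * Phi) = - (Phi * Phi) * poly_op F (K (Suc i))"
    using poly_op_intertwine[OF Phi_Y] by (simp add: mult.assoc)
  also have "scalar (inverse q - q) * scalar (inverse q - q) + 2 = scalar ((inverse q - q) * (inverse q - q) + 2)"
    by (simp add: scalar_add scalar_mult scalar_two)
  then have "- (Phi * Phi) = K i * K i - scalar ((inverse q - q) * (inverse q - q) + 2) * (K i * K (Suc i))
      + K (Suc i) * K (Suc i)"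
    using minus_Phi_square by simp
  finally show ?thesis .
qed

text \<open>Eliminating \<open>K\<^sub>i\<close> between \<open>H(K\<^sub>i, K\<^sub>i\<^sub>+\<^sub>1) F(K\<^sub>i\<^sub>+\<^sub>1)\<close> and \<open>F(K\<^sub>i) = \<Prod>\<^sub>r (K\<^sub>i - r)\<close> leaves
  \<open>\<Prod>\<^sub>r H(r, K\<^sub>i\<^sub>+\<^sub>1) F(K\<^sub>i\<^sub>+\<^sub>1)\<close>, and \<open>H(r, y) = (y - q\<^sup>2 r) (y - q\<^sup>-\<^sup>2 r)\<close>.\<close>

lemma K_Suc_annihilator:
  assumes M: "invariant M" and U: "invariant U" and i: "1 \<le> i" "i < d"
    and F: "app (poly_op (poly_of_roots rs) (K i)) ` M \<subseteq> U"
  shows "app (poly_op (poly_of_roots (concat (map (\<lambda>r. [r * q\<^sup>2, r * inverse (q\<^sup>2)] @ rs) rs))) (K (Suc i))) ` M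
    \<subseteq> U"
proof -
  define e X Y where "e = (inverse q - q) * (inverse q - q) + 2" and "X = K i" and "Y = K (Suc i)"
  define FY where "FY = poly_op (poly_of_roots rs) Y"
  define H G where "H = (X * X - scalar e * (X * Y) + Y * Y) * FY"
    and "G r = (X + scalar r - scalar e * Y) * FY" for r
  define J where "J A \<longleftrightarrow> app A ` M \<subseteq> U" for A
  have X_Y: "X * Y = Y * X" unfolding X_def Y_def by (rule K_commute) (use i in simp_all)
  have hecke_XY: "X \<in> hecke" "Y \<in> hecke"
    unfolding X_def Y_def by (rule hecke_K, use i in simp)+
  have "A \<in> hecke" if "A \<in> alg_gen X Y" for A
    using that by induction (auto intro: hecke.intros hecke_XY)
  then have J_mult: "J (E * A)" if "E \<in> alg_gen X Y" "J A" for E A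
    using image_app_hecke_left[OF M] that unfolding J_def by blast
  have alg_gen_FY: "FY \<in> alg_gen X Y"
    unfolding FY_def by (intro alg_gen_poly_op alg_gen.Y)
  have "J (prod_list (map (\<lambda>r. H - (X - scalar r) * G r) rs))"
  proof (rule ideal_prod_list_diff[where C = "alg_gen X Y"])
    show "J (A - B)" if "J A" "J B" for A B
      using that unfolding J_def by (rule image_app_diff[OF U])
    show "A * B = B * A" if "A \<in> alg_gen X Y" "B \<in> alg_gen X Y" for A B
      using alg_gen_commute[OF X_Y that] .
    show "J H"
      using K_quadratic_annihilator[OF M U i F] unfolding J_def H_def FY_def X_def Y_def e_def .
    show "J (prod_list (map (\<lambda>r. X - scalar r) rs))"
      using F unfolding J_def X_def poly_op_poly_of_roots .
    show "H \<in> alg_gen X Y"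
      unfolding H_def using alg_gen_FY
      by (intro alg_gen.mult alg_gen.add alg_gen_diff alg_gen.X alg_gen.Y alg_gen.scalar)
    show "X - scalar r \<in> alg_gen X Y \<and> G r \<in> alg_gen X Y" for r
      unfolding G_def using alg_gen_FY
      by (intro conjI alg_gen.mult alg_gen.add alg_gen_diff alg_gen.X alg_gen.Y alg_gen.scalar)
  qed (fact J_mult alg_gen_diff alg_gen.mult alg_gen_one)+
  moreover have "H - (X - scalar r) * G r = poly_op (poly_of_roots ([r * q\<^sup>2, r * inverse (q\<^sup>2)] @ rs)) Y" for r
    unfolding H_def G_def FY_def quadratic_elimination poly_of_roots_append e_def
      poly_of_roots_q_pair[OF q_nonzero] ..
  ultimately have "J (prod_list (map (\<lambda>r. poly_op (poly_of_roots ([r * q\<^sup>2, r * inverse (q\<^sup>2)] @ rs)) Y) rs))"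
    by simp
  then show ?thesis
    unfolding J_def Y_def poly_of_roots_concat[symmetric] poly_op_prod_list map_map comp_def .
qed

lemma K_annihilator:
  assumes M: "invariant M" and U: "invariant U"
    and T0: "app (poly_op (poly_of_roots bs) (T 0)) ` M \<subseteq> U" and i: "1 \<le> i" "i \<le> d"
  shows "\<exists>rs. set rs \<subseteq> q_spread q (set bs) i \<and> app (poly_op (poly_of_roots rs) (K i)) ` M \<subseteq> U"
  using i
proof (induction i rule: nat_induct_at_least)
  case base
  show ?case
    using T0 subset_q_spread_1[of "set bs" q] by (intro exI[of _ bs]) simp
next
  case (Suc i)
  then obtain rs where rs: "set rs \<subseteq> q_spread q (set bs) i" "app (poly_op (poly_of_roots rs) (K i)) ` M \<subseteq> U"
    by auto
  have "r \<in> q_spread q (set bs) (Suc i) \<and> r * q\<^sup>2 \<in> q_spread q (set bs) (Suc i) \<and>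
      r * inverse (q\<^sup>2) \<in> q_spread q (set bs) (Suc i)" if "r \<in> set rs" for r
    using rs(1) that q_spread_Suc[OF q_nonzero, of r "set bs" i] q_spread_mono[of i "Suc i" q "set bs"] by auto
  then have "set (concat (map (\<lambda>r. [r * q\<^sup>2, r * inverse (q\<^sup>2)] @ rs) rs)) \<subseteq> q_spread q (set bs) (Suc i)"
    by auto
  moreover have "app (poly_op (poly_of_roots (concat (map (\<lambda>r. [r * q\<^sup>2, r * inverse (q\<^sup>2)] @ rs) rs)))
      (K (Suc i))) ` M \<subseteq> U"
    by (rule K_Suc_annihilator[OF M U Suc.hyps _ rs(2)]) (use Suc.prems in simp)
  ultimately show ?case by blast
qed

lemma T_0_annihilator: "poly_op (poly_of_roots [inverse Q, - Q]) (T 0) = 0"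
proof -
  have TQ: "T 0 * scalar Q = scalar Q * T 0" by (rule scalar_commute[symmetric])
  have QQ: "scalar (inverse Q) * scalar Q = 1"
    using Q_nonzero by (simp add: scalar_one flip: scalar_mult)
  have "poly_op (poly_of_roots [inverse Q, - Q]) (T 0) = (T 0 - scalar (inverse Q)) * (T 0 + scalar Q)"
    by (simp add: poly_op_poly_of_roots scalar_minus)
  also have "\<dots> = T 0 * T 0 - (scalar (inverse Q) - scalar Q) * T 0 - 1"
    using TQ QQ by (simp add: algebra_simps)
  also have "\<dots> = 0"
    using T_op_0_quadratic[OF Q_nonzero, of q d] by (simp add: scalar_diff)
  finally show ?thesis .
qed

lemma eigenvalue_in_q_spread:
  assumes M: "invariant M" and T0: "app (T 0 - scalar b) ` M \<subseteq> {\<lambda>x. 0}"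
    and v: "v \<in> M" "v \<noteq> (\<lambda>x. 0)" "app (K i) v = (\<lambda>w. e * v w)" and i: "1 \<le> i" "i \<le> d"
  shows "e \<in> q_spread q {b} i"
proof -
  obtain rs where "set rs \<subseteq> q_spread q {b} i" "app (poly_op (poly_of_roots rs) (K i)) ` M \<subseteq> {\<lambda>x. 0}"
    using K_annihilator[OF M invariant_zero _ i, of "[b]"] T0 by (auto simp: poly_op_poly_of_roots)
  then show ?thesis
    using app_poly_of_roots_eigenvector[OF v(3) _ v(2)] v(1) by blast
qed

lemma K_global_annihilator:
  "\<exists>rs. set rs \<subseteq> q_spread q {inverse Q, - Q} d \<and> (\<forall>i\<in>{1..d}. poly_op (poly_of_roots rs) (K i) = 0)"
proof -
  have "\<exists>rs. set rs \<subseteq> q_spread q {inverse Q, - Q} i \<and> poly_op (poly_of_roots rs) (K i) = 0"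
    if "i \<in> {1..d}" for i
    using K_annihilator[OF invariant_UNIV invariant_zero, of "[inverse Q, - Q]" i] that T_0_annihilator
    by (auto simp: app_zero intro: linop_eq_0I)
  then obtain rs where rs: "\<And>i. i \<in> {1..d} \<Longrightarrow>
      set (rs i) \<subseteq> q_spread q {inverse Q, - Q} i \<and> poly_op (poly_of_roots (rs i)) (K i) = 0"
    by metis
  define all where "all = concat (map rs [1..<Suc d])"
  have "set all \<subseteq> q_spread q {inverse Q, - Q} d"
  proof
    fix x assume "x \<in> set all"
    then obtain i where "i \<in> {1..d}" "x \<in> set (rs i)" unfolding all_def by (auto simp del: upt_Suc simp: less_Suc_eq_le)
    then show "x \<in> q_spread q {inverse Q, - Q} d"
      using rs q_spread_mono[of i d q "{inverse Q, - Q}"] by auto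
  qed
  moreover have "poly_op (poly_of_roots all) (K i) = 0" if "i \<in> {1..d}" for i
  proof -
    have "i \<in> set [1..<Suc d]" using that by auto
    then obtain xs ys where split: "[1..<Suc d] = xs @ i # ys" by (meson split_list)
    have "poly_op (poly_of_roots all) (K i) = poly_op (poly_of_roots (concat (map rs xs))) (K i) *
        (poly_op (poly_of_roots (rs i)) (K i) * poly_op (poly_of_roots (concat (map rs ys))) (K i))"
      unfolding all_def split by (simp add: poly_of_roots_append poly_op_mult)
    then show ?thesis using rs[OF that] by simp
  qed
  ultimately show ?thesis by blast
qed

end

section \<open>Projections onto generalised eigenspaces\<close>

locale eigen_projection = hecke_tensor Q q d for Q q :: "'k::field" and d :: nat +
  fixes rs :: "'k list" and E :: "'k set" and s t :: "'k poly"
  assumes annihilates: "\<forall>i\<in>{1..d}. poly_op (poly_of_roots rs) (K i) = 0"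
    and bezout: "s * poly_of_roots (filter (\<lambda>x. x \<notin> E) rs) + t * poly_of_roots (filter (\<lambda>x. x \<in> E) rs) = 1"
begin

abbreviation inside where "inside \<equiv> poly_of_roots (filter (\<lambda>x. x \<in> E) rs)"
abbreviation outside where "outside \<equiv> poly_of_roots (filter (\<lambda>x. x \<notin> E) rs)"

text \<open>\<open>proj i\<close> projects onto the generalised eigenspaces of \<open>K\<^sub>i\<close> with eigenvalues in \<open>E\<close>.\<close>

definition proj :: "nat \<Rightarrow> 'k linop" where
  "proj i = poly_op (s * outside) (K i)"

lemma one_minus_proj: "1 - proj i = poly_op (t * inside) (K i)"
  using arg_cong[OF bezout, of "\<lambda>p. poly_op p (K i)"]
  by (simp add: proj_def poly_op_add poly_op_1 algebra_simps)

lemma inside_outside: "poly_of_roots rs = inside * outside"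
  by (rule poly_of_roots_partition)

lemma poly_op_multiple_annihilator: "i \<in> {1..d} \<Longrightarrow> poly_op (c * inside * outside) (K i) = 0"
  using annihilates by (simp add: poly_op_mult inside_outside[symmetric] mult.assoc)

lemma inside_proj: "i \<in> {1..d} \<Longrightarrow> poly_op inside (K i) * proj i = 0"
  using poly_op_multiple_annihilator[of i s]
  unfolding proj_def poly_op_mult[symmetric] by (simp add: ac_simps)

lemma outside_one_minus_proj: "i \<in> {1..d} \<Longrightarrow> poly_op outside (K i) * (1 - proj i) = 0"
  using poly_op_multiple_annihilator[of i t]
  unfolding one_minus_proj poly_op_mult[symmetric] by (simp add: ac_simps)

lemma proj_idem: "i \<in> {1..d} \<Longrightarrow> proj i * proj i = proj i"
proof -
  assume i: "i \<in> {1..d}"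
  have "proj i * (1 - proj i) = 0"
    using poly_op_multiple_annihilator[OF i, of "s * t"]
    unfolding one_minus_proj unfolding proj_def poly_op_mult[symmetric] by (simp add: ac_simps)
  then show ?thesis by (simp add: algebra_simps)
qed

lemma proj_commute: "i \<le> d \<Longrightarrow> k \<le> d \<Longrightarrow> proj i * proj k = proj k * proj i"
  unfolding proj_def by (intro poly_op_commute[symmetric] poly_op_commute K_commute) 

lemma hecke_proj: "i \<le> d \<Longrightarrow> proj i \<in> hecke"
  unfolding proj_def by (intro hecke_poly_op hecke_K)

lemma inside_kills_proj_fixed:
  assumes "i \<in> {1..d}" "app (proj i) v = v"
  shows "app (poly_op inside (K i)) v = (\<lambda>x. 0)"
proof -
  have "app (poly_op inside (K i)) v = app (proj i * poly_op inside (K i)) v"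
    using assms(2) by (simp add: app_times)
  also have "proj i * poly_op inside (K i) = 0"
    using inside_proj[OF assms(1)] unfolding proj_def by (metis poly_op_mult_commute)
  finally show ?thesis by (simp add: app_zero)
qed

lemma one_minus_proj_image:
  assumes i: "i \<in> {1..d}" and M: "invariant M" and U: "invariant U" and fs: "set fs \<subseteq> E"
    and F: "app (poly_op (poly_of_roots fs) (K i)) ` M \<subseteq> U"
  shows "app (1 - proj i) ` M \<subseteq> U"
proof
  fix x assume "x \<in> app (1 - proj i) ` M"
  then obtain v where v: "v \<in> M" and x: "x = app (1 - proj i) v" by blast
  obtain c e where ce: "c * poly_of_roots fs + e * outside = 1"
    using comaximal_poly_of_roots[of fs "filter (\<lambda>x. x \<notin> E) rs"] fs by (auto simp: comaximal_def)
  have "1 - proj i \<in> hecke" using i by (intro hecke_diff hecke_one hecke_proj) auto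
  then have "x \<in> M" using x v M by (simp add: app_hecke_mem)
  have "(1 - proj i) * poly_op outside (K i) = 0"
    using outside_one_minus_proj[OF i] unfolding one_minus_proj by (simp add: poly_op_mult_commute)
  then have "app (poly_op outside (K i)) x = (\<lambda>x. 0)"
    using x by (simp flip: app_times add: app_zero)
  moreover have "x = app (poly_op (c * poly_of_roots fs + e * outside) (K i)) x"
    using ce by (simp add: poly_op_1 app_one)
  ultimately have "x = app (poly_op c (K i)) (app (poly_op (poly_of_roots fs) (K i)) x)"
    by (simp add: poly_op_add poly_op_mult app_plus app_times app_zero_fun poly_op_mult_commute[of c] poly_op_mult_commute[of e "K i" outside])
  moreover have "app (poly_op (poly_of_roots fs) (K i)) x \<in> U" using F \<open>x \<in> M\<close> by blast
  moreover have "poly_op c (K i) \<in> hecke" using i by (intro hecke_poly_op hecke_K) simp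
  ultimately show "x \<in> U"
    using U by (metis app_hecke_mem)
qed

lemma T_commute_proj:
  assumes "j < d" "i \<le> d" "i \<noteq> j" "i \<noteq> Suc j"
  shows "T j * proj i = proj i * T j"
  unfolding proj_def
proof (rule poly_op_commute)
  show "T j * K i = K i * T j"
    using assms T_K_commute_above[of i j] T_K_commute_below[of j i] by (cases "i < j") auto
qed

lemma T_commute_proj_pair:
  assumes "1 \<le> j" "j < d"
  shows "T j * (proj j * proj (Suc j)) = (proj j * proj (Suc j)) * T j"
  unfolding proj_def by (rule quadratic_conjugate_commute_poly_op_pair[OF quadratic_conjugate_K[OF assms]])

primrec proj_upto :: "nat \<Rightarrow> 'k linop" where
  "proj_upto 0 = 1"
| "proj_upto (Suc m) = proj_upto m * proj (Suc m)"

lemma hecke_proj_upto: "m \<le> d \<Longrightarrow> proj_upto m \<in> hecke"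
  by (induction m) (auto simp: hecke_one hecke_proj intro: hecke.mult)

lemma proj_upto_commute_proj: "m \<le> d \<Longrightarrow> i \<le> d \<Longrightarrow> proj_upto m * proj i = proj i * proj_upto m"
proof (induction m)
  case (Suc m)
  then have "proj_upto m * proj i * proj (Suc m) = proj i * proj_upto m * proj (Suc m)" by simp
  then show ?case using proj_commute[of "Suc m" i] Suc.prems by (simp add: mult.assoc)
qed simp

lemma proj_upto_absorb: "i \<in> {1..m} \<Longrightarrow> m \<le> d \<Longrightarrow> proj_upto m * proj i = proj_upto m"
proof (induction m)
  case (Suc m)
  show ?case
  proof (cases "i = Suc m")
    case True
    then show ?thesis using proj_idem[of "Suc m"] Suc.prems by (simp add: mult.assoc)
  next
    case False
    then have absorb: "proj_upto m * proj i = proj_upto m" using Suc by simp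
    have "proj_upto (Suc m) * proj i = proj_upto m * (proj (Suc m) * proj i)"
      by (simp add: mult.assoc)
    also have "\<dots> = proj_upto m * proj i * proj (Suc m)"
      using proj_commute[of "Suc m" i] Suc.prems by (simp add: mult.assoc)
    finally show ?thesis using absorb by simp
  qed
qed simp

lemma proj_upto_idem: "m \<le> d \<Longrightarrow> proj_upto m * proj_upto m = proj_upto m"
proof (induction m)
  case (Suc m)
  have "proj_upto (Suc m) * proj_upto (Suc m) = (proj_upto m * proj (Suc m)) * proj_upto m * proj (Suc m)"
    by (simp add: mult.assoc)
  also have "\<dots> = proj_upto m * (proj (Suc m) * proj_upto m) * proj (Suc m)"
    by (simp only: mult.assoc)
  also have "\<dots> = proj_upto m * (proj_upto m * proj (Suc m)) * proj (Suc m)"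
    using proj_upto_commute_proj[of m "Suc m"] Suc.prems by simp
  also have "\<dots> = proj_upto m * proj_upto m * (proj (Suc m) * proj (Suc m))"
    by (simp only: mult.assoc)
  also have "\<dots> = proj_upto (Suc m)"
    using Suc proj_idem[of "Suc m"] by simp
  finally show ?case .
qed simp

lemma proj_upto_fixed_iff:
  "m \<le> d \<Longrightarrow> app (proj_upto m) v = v \<longleftrightarrow> (\<forall>i\<in>{1..m}. app (proj i) v = v)"
proof
  assume m: "m \<le> d" and v: "app (proj_upto m) v = v"
  show "\<forall>i\<in>{1..m}. app (proj i) v = v"
  proof
    fix i assume "i \<in> {1..m}"
    then show "app (proj i) v = v"
      using v proj_upto_absorb[of i m] m by (metis app_times)
  qed
next
  show "m \<le> d \<Longrightarrow> \<forall>i\<in>{1..m}. app (proj i) v = v \<Longrightarrow> app (proj_upto m) v = v"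
    by (induction m) (simp_all add: app_one app_times)
qed

lemma one_minus_proj_upto_image:
  assumes M: "invariant M" and U: "invariant U"
    and complements: "\<And>i. i \<in> {1..d} \<Longrightarrow> app (1 - proj i) ` M \<subseteq> U"
  shows "m \<le> d \<Longrightarrow> app (1 - proj_upto m) ` M \<subseteq> U"
proof (induction m)
  case 0
  then show ?case using U by (auto simp: app_zero invariant_def)
next
  case (Suc m)
  have "app (1 - proj_upto (Suc m)) v = (\<lambda>x. app (1 - proj_upto m) v x + app (1 - proj (Suc m)) (app (proj_upto m) v) x)"
    for v by (simp add: app_minus app_one app_times fun_eq_iff)
  moreover have "app (proj_upto m) v \<in> M" if "v \<in> M" for v
    using app_hecke_mem[OF hecke_proj_upto M that] Suc.prems by simp
  ultimately show ?case
    using Suc complements[of "Suc m"] invariant_add[OF U] by (auto simp: image_subset_iff)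
qed

text \<open>\<open>T\<^sub>j\<close> commutes with \<open>K\<^sub>i\<close> for \<open>i \<notin> {j, j + 1}\<close>, and with \<open>proj j * proj (j + 1)\<close>, which is
  symmetric in \<open>K\<^sub>j\<close> and \<open>K\<^sub>j\<^sub>+\<^sub>1\<close>.\<close>

lemma proj_upto_commute_T:
  assumes "j < d"
  shows "T j * proj_upto d = proj_upto d * T j"
proof -
  have "T j * proj_upto m = proj_upto m * T j" if "m \<le> d" "m \<noteq> j" for m
    using that
  proof (induction m rule: less_induct)
    case (less m)
    show ?case
    proof (cases m)
      case (Suc m')
      show ?thesis
      proof (cases "m = Suc j \<and> j \<noteq> 0")
        case True
        then obtain j' where j': "j = Suc j'" by (cases j) auto
        have "proj_upto m = proj_upto j' * (proj j * proj (Suc j))"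
          using True j' by (simp add: mult.assoc)
        moreover have "T j * proj_upto j' = proj_upto j' * T j"
          using less.IH[of j'] less.prems j' True by simp
        ultimately show ?thesis
          using T_commute_proj_pair[of j] True assms j' by (simp add: commute_mult)
      next
        case False
        have "T j * proj_upto m' = proj_upto m' * T j"
        proof (cases "m' = j")
          case True
          then show ?thesis using False Suc by simp
        qed (use less.IH[of m'] less.prems Suc in simp)
        moreover have "T j * proj m = proj m * T j"
        proof (cases "j = 0 \<and> m = 1")
          case True
          then show ?thesis unfolding proj_def by (intro poly_op_commute) simp
        next
          case False
          then show ?thesis using \<open>\<not> (m = Suc j \<and> j \<noteq> 0)\<close> less.prems assms
            by (intro T_commute_proj) auto
        qed
        ultimately show ?thesis using Suc by (simp add: commute_mult)
      qed
    qed simp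
  qed
  then show ?thesis using assms by simp
qed

abbreviation P where "P \<equiv> proj_upto d"

lemma hecke_P: "P \<in> hecke"
  by (simp add: hecke_proj_upto)

lemma app_P_idem: "app P (app P f) = app P f"
  using proj_upto_idem[of d] by (metis app_times order_refl)

lemma app_P_commute_T: "j < d \<Longrightarrow> app P (app (T j) f) = app (T j) (app P f)"
  using proj_upto_commute_T[of j] by (metis app_times)

lemma P_Tens: "f \<in> Tens n d \<Longrightarrow> app P f \<in> Tens n d"
  by (rule app_hecke_mem[OF hecke_P invariant_Tens])

lemma natural_idempotent_P: "natural_idempotent Q q d (\<lambda>n. app P)"
  unfolding natural_idempotent_def
proof (intro conjI allI ballI)
  show "app P \<in> HomH Q q d n n" for n
    unfolding HomH_def
    using P_Tens act_eq_T_op[of _ n d _ Q q] app_P_commute_T T_op_Tens[of _ n d _ Q q]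
    by (auto simp: app_add app_smult)
  show "\<phi> (app P f) = app P (\<phi> f)" if "\<phi> \<in> HomH Q q d n m" "f \<in> Tens n d" for n m \<phi> f
    using hom_commute_hecke[OF hecke_P that] .
qed (rule app_P_idem)

lemma P_fixed_killed_by_T_0:
  assumes d: "1 \<le> d" and quad: "(T 0 - scalar b) * (T 0 - scalar b') = 0" and b': "b' \<notin> E"
    and v: "app P v = v"
  shows "app (T 0 - scalar b) v = (\<lambda>x. 0)"
proof -
  define w where "w = app (T 0 - scalar b) v"
  have "app (proj 1) v = v" using v proj_upto_fixed_iff[of d v] d by simp
  then have "app (poly_op inside (T 0)) v = (\<lambda>x. 0)"
    using inside_kills_proj_fixed[of 1 v] d by simp
  moreover have "(T 0 - scalar b) * poly_op inside (T 0) = poly_op inside (T 0) * (T 0 - scalar b)"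
    using poly_op_mult_commute[of "[:- b, 1:]" "T 0" inside] by (simp only: poly_op_linear)
  ultimately have "app (poly_op inside (T 0)) w = (\<lambda>x. 0)"
    unfolding w_def by (metis app_times app_zero_fun)
  moreover have "app (T 0) w = (\<lambda>x. b' * w x)"
  proof -
    have "app (T 0 - scalar b') w = (\<lambda>x. 0)"
      using quad unfolding w_def by (simp flip: app_times add: app_zero)
    then show ?thesis by (simp add: app_minus app_scalar fun_eq_iff)
  qed
  moreover have "w \<noteq> (\<lambda>x. 0) \<Longrightarrow> b' \<in> set (filter (\<lambda>x. x \<in> E) rs)"
    using calculation by (intro app_poly_of_roots_eigenvector[of "T 0"]) auto
  ultimately show ?thesis using b' unfolding w_def by auto
qed

lemma one_minus_P_image:
  assumes M: "invariant M" and U: "invariant U"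
    and T0: "1 \<le> d \<Longrightarrow> app (T 0 - scalar b) ` M \<subseteq> U" and E: "q_spread q {b} d \<subseteq> E"
  shows "app (1 - P) ` M \<subseteq> U"
proof (rule one_minus_proj_upto_image[OF M U _ order_refl])
  fix i assume i: "i \<in> {1..d}"
  then obtain fs where fs: "set fs \<subseteq> q_spread q {b} i" "app (poly_op (poly_of_roots fs) (K i)) ` M \<subseteq> U"
    using K_annihilator[OF M U, of "[b]" i] T0 by (auto simp: poly_op_poly_of_roots)
  have "set fs \<subseteq> E" using fs(1) q_spread_mono[of i d q "{b}"] E i by auto
  then show "app (1 - proj i) ` M \<subseteq> U"
    by (rule one_minus_proj_image[OF i M U _ fs(2)])
qed

end

section \<open>The summands \<open>\<otimes>\<^sup>d\<^sub>+\<close> and \<open>\<otimes>\<^sup>d\<^sub>-\<close>\<close>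

context hecke_tensor
begin

lemma T_0_quadratic_factors:
  "(T 0 - scalar (inverse Q)) * (T 0 - scalar (- Q)) = 0"
  "(T 0 - scalar (- Q)) * (T 0 - scalar (inverse Q)) = 0"
proof -
  show "(T 0 - scalar (inverse Q)) * (T 0 - scalar (- Q)) = 0"
    using T_0_annihilator by (simp add: poly_op_poly_of_roots)
  then show "(T 0 - scalar (- Q)) * (T 0 - scalar (inverse Q)) = 0"
    by (simp only: linear_factors_commute)
qed

lemma T_0_kills_of_sub_eigs:
  assumes S: "invariant S" "S \<subseteq> Tens n d" and d: "1 \<le> d"
    and eigs: "sub_eigs_in Q q d n S 1 A" and b': "b' \<notin> A"
    and quad: "(T 0 - scalar b) * (T 0 - scalar b') = 0"
  shows "app (T 0 - scalar b) ` S \<subseteq> {\<lambda>x. 0}"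
proof
  fix w assume "w \<in> app (T 0 - scalar b) ` S"
  then obtain v where v: "v \<in> S" and w: "w = app (T 0 - scalar b) v" by blast
  have "w \<in> S" using w v S(1) d by (auto intro!: app_hecke_mem hecke_diff hecke.intros)
  have "app (T 0 - scalar b') w = (\<lambda>x. 0)"
    using quad w by (simp flip: app_times add: app_zero)
  then have "Kact Q q n d 1 w = (\<lambda>x. b' * w x)"
    using Kact_eq_K_op[of w n d 1 Q q] \<open>w \<in> S\<close> S(2) d by (auto simp: app_minus app_scalar fun_eq_iff)
  then show "w \<in> {\<lambda>x. 0}"
    using eigs b' \<open>w \<in> S\<close> unfolding sub_eigs_in_def by blast
qed

lemma T_0_image_of_quot_eigs:
  assumes U: "invariant U" and d: "1 \<le> d"
    and eigs: "quot_eigs_in Q q d n U 1 A" and b': "b' \<notin> A"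
    and quad: "(T 0 - scalar b) * (T 0 - scalar b') = 0"
  shows "app (T 0 - scalar b) ` Tens n d \<subseteq> U"
proof
  fix w assume "w \<in> app (T 0 - scalar b) ` Tens n d"
  then obtain v where v: "v \<in> Tens n d" and w: "w = app (T 0 - scalar b) v" by blast
  have "w \<in> Tens n d" using w v d by (auto intro!: app_hecke_mem[OF _ invariant_Tens] hecke_diff hecke.intros)
  have "(\<lambda>x. Kact Q q n d 1 w x - b' * w x) = app (T 0 - scalar b') w"
    using Kact_eq_K_op[of w n d 1 Q q] \<open>w \<in> Tens n d\<close> d by (simp add: app_minus app_scalar)
  also have "\<dots> = (\<lambda>x. 0)"
    using quad w by (simp flip: app_times add: app_zero)
  finally have "(\<lambda>x. Kact Q q n d 1 w x - b' * w x) \<in> U"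
    using U by (simp add: invariant_def)
  then show "w \<in> U"
    using eigs b' \<open>w \<in> Tens n d\<close> unfolding quot_eigs_in_def by blast
qed

lemma eigen_projection_exists:
  assumes "\<forall>i\<in>{1..d}. poly_op (poly_of_roots rs) (K i) = 0"
  obtains s t where "eigen_projection Q q d rs E s t"
proof -
  obtain s t where "s * poly_of_roots (filter (\<lambda>x. x \<notin> E) rs) + t * poly_of_roots (filter (\<lambda>x. x \<in> E) rs) = 1"
    using comaximal_poly_of_roots[of "filter (\<lambda>x. x \<notin> E) rs" "filter (\<lambda>x. x \<in> E) rs"]
    by (auto simp: comaximal_def)
  then show ?thesis
    using that assms Q_nonzero q_nonzero
    by (auto simp: eigen_projection_def eigen_projection_axioms_def hecke_tensor_def)
qed

end

context eigen_projection
begin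

definition P_image :: "nat \<Rightarrow> (int list \<Rightarrow> 'k) set" where
  "P_image n = {f \<in> Tens n d. app P f = f}"

definition P_kernel :: "nat \<Rightarrow> (int list \<Rightarrow> 'k) set" where
  "P_kernel n = {f \<in> Tens n d. app P f = (\<lambda>x. 0)}"

lemma invariant_P_image: "invariant (P_image n)"
  unfolding P_image_def using invariant_Tens[of n] app_P_commute_T T_op_Tens
  by (auto simp: invariant_def app_add app_smult app_zero_fun)

lemma invariant_P_kernel: "invariant (P_kernel n)"
  unfolding P_kernel_def using invariant_Tens[of n] app_P_commute_T T_op_Tens
  by (auto simp: invariant_def app_add app_smult app_zero_fun)

lemma image_P: "app P ` Tens n d = P_image n"
  unfolding P_image_def using P_Tens app_P_idem by (auto intro: rev_image_eqI)

lemma subfunctor_P_image: "subfunctor Q q d P_image"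
  unfolding subfunctor_def
proof (intro conjI allI ballI)
  show "submodule Q q d n (P_image n)" for n
    using invariant_P_image invariant_iff_submodule[of "P_image n" n] by (auto simp: P_image_def)
  show "\<phi> ` P_image n \<subseteq> P_image m" if "\<phi> \<in> HomH Q q d n m" for n m \<phi>
    using that hom_commute_hecke[OF hecke_P that, symmetric] by (auto simp: P_image_def HomH_def)
qed

lemma subfunctor_P_kernel: "subfunctor Q q d P_kernel"
  unfolding subfunctor_def
proof (intro conjI allI ballI)
  show "submodule Q q d n (P_kernel n)" for n
    using invariant_P_kernel invariant_iff_submodule[of "P_kernel n" n] by (auto simp: P_kernel_def)
  show "\<phi> ` P_kernel n \<subseteq> P_kernel m" if "\<phi> \<in> HomH Q q d n m" for n m \<phi>
    using that hom_commute_hecke[OF hecke_P that, symmetric] hom_zero[OF that]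
    by (auto simp: P_kernel_def HomH_def)
qed

lemma minus_prop_P_image:
  assumes E: "E = minus_eig Q q d" and sep: "inverse Q \<notin> minus_eig Q q d"
  shows "minus_prop Q q d P_image"
  unfolding minus_prop_def sub_eigs_in_def minus_eig_eq
proof (intro conjI subfunctor_P_image ballI allI impI)
  fix n i f e
  assume i: "i \<in> {1..d}" and f: "f \<in> P_image n" and ev: "f \<noteq> (\<lambda>w. 0) \<and> Kact Q q n d i f = (\<lambda>w. e * f w)"
  have "inverse Q \<notin> E" using E sep by simp
  then have "app (T 0 - scalar (- Q)) ` P_image n \<subseteq> {\<lambda>x. 0}"
    using P_fixed_killed_by_T_0[OF _ T_0_quadratic_factors(2)] i by (auto simp: P_image_def)
  moreover have "app (K i) f = (\<lambda>w. e * f w)"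
    using ev f i Kact_eq_K_op[of f n d i Q q] by (simp add: P_image_def)
  ultimately show "e \<in> q_spread q {- Q} i"
    using eigenvalue_in_q_spread[OF invariant_P_image _ f] ev i by auto
qed

lemma minus_prop_subset_P_image:
  assumes E: "E = minus_eig Q q d" and sep: "inverse Q \<notin> minus_eig Q q d"
    and S: "minus_prop Q q d S"
  shows "S n \<subseteq> P_image n"
proof -
  have sub: "submodule Q q d n (S n)" using S by (simp add: minus_prop_def subfunctor_def)
  then have S_Tens: "S n \<subseteq> Tens n d" by (simp add: submodule_def)
  have S_inv: "invariant (S n)" using invariant_iff_submodule[OF S_Tens] sub by simp
  have "app (T 0 - scalar (- Q)) ` S n \<subseteq> {\<lambda>x. 0}" if "1 \<le> d"
  proof (rule T_0_kills_of_sub_eigs[OF S_inv S_Tens that _ _ T_0_quadratic_factors(2)])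
    show "sub_eigs_in Q q d n (S n) 1 (minus_eig Q q 1)"
      using S that by (simp add: minus_prop_def)
    show "inverse Q \<notin> minus_eig Q q 1"
      using sep q_spread_mono[of 1 d q "{- Q}"] that by (auto simp: minus_eig_eq)
  qed
  moreover have "q_spread q {- Q} d \<subseteq> E" using E by (simp add: minus_eig_eq)
  ultimately have "app (1 - P) ` S n \<subseteq> {\<lambda>x. 0}"
    by (rule one_minus_P_image[OF S_inv invariant_zero])
  then show ?thesis
    using S_Tens by (auto simp: P_image_def app_minus app_one fun_eq_iff)
qed

lemma plus_prop_P_kernel:
  assumes E: "E = plus_eig Q q d" and sep: "- Q \<notin> plus_eig Q q d"
  shows "plus_prop Q q d P_kernel"
  unfolding plus_prop_def quot_eigs_in_def plus_eig_eq
proof (intro conjI subfunctor_P_kernel ballI allI impI)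
  fix n i f e
  assume i: "i \<in> {1..d}" and f: "f \<in> Tens n d"
    and ev: "f \<notin> P_kernel n \<and> (\<lambda>w. Kact Q q n d i f w - e * f w) \<in> P_kernel n"
  have sep_E: "- Q \<notin> E" using E sep by simp
  define g where "g = app P f"
  have g: "g \<in> P_image n" "g \<noteq> (\<lambda>x. 0)"
    using f ev P_Tens app_P_idem unfolding g_def P_image_def P_kernel_def by auto
  have "app P (\<lambda>w. app (K i) f w - e * f w) = (\<lambda>x. 0)"
    using ev f i Kact_eq_K_op[of f n d i Q q] by (simp add: P_kernel_def)
  then have "app P (app (K i) f) = (\<lambda>w. e * g w)"
    unfolding g_def by (simp add: app_diff app_smult fun_eq_iff)
  moreover have "P * K i = K i * P"
    using proj_upto_commute_T i by (intro commute_K_of_commute_T) auto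
  ultimately have "app (K i) g = (\<lambda>w. e * g w)"
    unfolding g_def by (metis app_times)
  moreover have "app (T 0 - scalar (inverse Q)) ` P_image n \<subseteq> {\<lambda>x. 0}"
    using P_fixed_killed_by_T_0[OF _ T_0_quadratic_factors(1) sep_E] i by (auto simp: P_image_def)
  ultimately show "e \<in> q_spread q {inverse Q} i"
    using eigenvalue_in_q_spread[OF invariant_P_image _ g] i by auto
qed

lemma plus_prop_P_kernel_subset:
  assumes E: "E = plus_eig Q q d" and sep: "- Q \<notin> plus_eig Q q d"
    and U: "plus_prop Q q d U"
  shows "P_kernel n \<subseteq> U n"
proof -
  have "submodule Q q d n (U n)" using U by (simp add: plus_prop_def subfunctor_def)
  then have U_inv: "invariant (U n)"
    using invariant_iff_submodule[of "U n" n] by (simp add: submodule_def)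
  have "app (T 0 - scalar (inverse Q)) ` Tens n d \<subseteq> U n" if "1 \<le> d"
  proof (rule T_0_image_of_quot_eigs[OF U_inv that _ _ T_0_quadratic_factors(1)])
    show "quot_eigs_in Q q d n (U n) 1 (plus_eig Q q 1)"
      using U that by (simp add: plus_prop_def)
    show "- Q \<notin> plus_eig Q q 1"
      using sep q_spread_mono[of 1 d q "{inverse Q}"] that by (auto simp: plus_eig_eq)
  qed
  moreover have "q_spread q {inverse Q} d \<subseteq> E" using E by (simp add: plus_eig_eq)
  ultimately have "app (1 - P) ` Tens n d \<subseteq> U n"
    by (rule one_minus_P_image[OF invariant_Tens U_inv])
  moreover have "app (1 - P) f = f" if "f \<in> P_kernel n" for f
    using that by (simp add: P_kernel_def app_minus app_one)
  ultimately show ?thesis unfolding P_kernel_def by force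
qed

lemma tensor_minus_summand:
  assumes "E = minus_eig Q q d" and "inverse Q \<notin> minus_eig Q q d"
  shows "\<exists>S. is_tensor_minus Q q d S \<and> summand_sub Q q d S"
  using minus_prop_P_image[OF assms] minus_prop_subset_P_image[OF assms] natural_idempotent_P image_P
  unfolding is_tensor_minus_def summand_sub_def by blast

lemma tensor_plus_summand:
  assumes "E = plus_eig Q q d" and "- Q \<notin> plus_eig Q q d"
  shows "\<exists>U. is_tensor_plus_kernel Q q d U \<and> summand_quot Q q d U"
  using plus_prop_P_kernel[OF assms] plus_prop_P_kernel_subset[OF assms] natural_idempotent_P
  unfolding is_tensor_plus_kernel_def summand_quot_def P_kernel_def by blast

end

lemma f_d_separates:
  fixes Q q :: "'k::field"
  assumes Q: "Q \<noteq> 0" and q: "q \<noteq> 0" and fd: "f_d d Q q \<noteq> 0"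
  shows "inverse Q \<notin> minus_eig Q q d" and "- Q \<notin> plus_eig Q q d"
proof -
  have factor: "Q powi (-2) + q powi (2 * j) \<noteq> 0" if "\<bar>j\<bar> < int d" for j
  proof -
    have "j \<in> {1 - int d..int d - 1}" using that by auto
    then show ?thesis using fd by (auto simp: f_d_def)
  qed
  have Qm2: "Q powi (-2) = inverse Q * inverse Q"
    by (simp add: power_int_minus power2_eq_square)
  show "inverse Q \<notin> minus_eig Q q d"
  proof
    assume "inverse Q \<in> minus_eig Q q d"
    then obtain j where j: "\<bar>j\<bar> < int d" "inverse Q = - Q * q powi (2 * j)"
      by (auto simp: minus_eig_def)
    have "Q powi (-2) = inverse Q * (- Q * q powi (2 * j))" using Qm2 j(2) by simp
    also have "\<dots> = - (q powi (2 * j))" using Q by simp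
    finally show False using factor[OF j(1)] by simp
  qed
  show "- Q \<notin> plus_eig Q q d"
  proof
    assume "- Q \<in> plus_eig Q q d"
    then obtain j where j: "\<bar>j\<bar> < int d" "- Q = inverse Q * q powi (2 * j)"
      by (auto simp: plus_eig_def)
    have "q powi (2 * j) * q powi (2 * (- j)) = 1" using q by (simp add: power_int_add[symmetric])
    then have "Q powi (-2) = inverse Q * (inverse Q * q powi (2 * j)) * q powi (2 * (- j))"
      using Qm2 by (simp add: mult.assoc)
    also have "\<dots> = - (q powi (2 * (- j)))" using j(2)[symmetric] Q by simp
    finally show False using factor[of "- j"] j(1) by simp
  qed
qed

theorem proposition7p6:
  fixes Q q :: "'k::field" and d :: nat
  assumes "Q \<noteq> 0" and "q \<noteq> 0" and "f_d d Q q \<noteq> 0"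
  shows "(\<exists>U. is_tensor_plus_kernel Q q d U \<and> summand_quot Q q d U) \<and>
         (\<exists>S. is_tensor_minus Q q d S \<and> summand_sub Q q d S)"
proof -
  interpret hecke_tensor Q q d using assms by unfold_locales
  obtain rs where rs: "\<forall>i\<in>{1..d}. poly_op (poly_of_roots rs) (K i) = 0"
    using K_global_annihilator by blast
  obtain s t where "eigen_projection Q q d rs (plus_eig Q q d) s t"
    using eigen_projection_exists[OF rs] .
  then have "\<exists>U. is_tensor_plus_kernel Q q d U \<and> summand_quot Q q d U"
    using eigen_projection.tensor_plus_summand f_d_separates(2)[OF assms] by blast
  moreover obtain s' t' where "eigen_projection Q q d rs (minus_eig Q q d) s' t'"
    using eigen_projection_exists[OF rs] .
  then have "\<exists>S. is_tensor_minus Q q d S \<and> summand_sub Q q d S"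
    using eigen_projection.tensor_minus_summand f_d_separates(1)[OF assms] by blast
  ultimately show ?thesis ..
qed

end
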